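(* Let $\mathcal X$ be a locally finite CAT(0) cube complex with hyperclosure $\mathfrak F$, and let $F\subseteq\mathcal X$ be a convex subcomplex. Then $F\in\mathfrak F$ if and only if there exist a compact convex subcomplex $C$ and a $0$-cube $c\in C$ such that $F$ equals the orthogonal complement of $C$ at $c$.
   Context: Combinatorial hyperplanes: for a hyperplane $H$ with carrier $\mathcal N(H)\cong H\times[-\tfrac12,\tfrac12]$, the images of $H\times\{\pm\tfrac12\}$. For convex $Y$, the gate map $\mathfrak g_Y$ sends each $0$-cube to the unique closest $0$-cube of $Y$, extended cubically. Two convex subcomplexes are parallel if exactly the same hyperplanes intersect them. The hyperclosure $\mathfrak F$ is the smallest set of convex subcomplexes containing $\mathcal X$ and every combinatorial hyperplane, closed under $(F,F')\mapsto\mathfrak g_F(F')$ and under parallelism. Orthogonal complement: for a convex subcomplex $A$, let $P_A$ be the convex hull of the union of all convex subcomplexes parallel to $A$; then there is a CAT(0) cube complex $A^\perp$ and a cubical isometric embedding $\phi_A:A\times A^\perp\to\mathcal X$ with image $P_A$ such that $\phi_A(A\times\{t\})$ are the parallel copies of $A$ and $\phi_A(A\times\{t_0\})=A$. For a $0$-cube $a\in A$, the orthogonal complement of $A$ at $a$ is $\phi_A(\{a\}\times A^\perp)$. *)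

theory Defs
  imports Main
begin

text \<open>A CAT(0) cube complex is modelled by its 1-skeleton, a median graph
(Chepoi / Roller / Gerasimov).  Convex subcomplexes are modelled by their (nonempty,
geodesically convex) sets of 0-cubes.\<close>

definition gdist :: "('a \<Rightarrow> 'a \<Rightarrow> bool) \<Rightarrow> 'a \<Rightarrow> 'a \<Rightarrow> nat" where
  "gdist E x y = (LEAST n. (E ^^ n) x y)"

definition interval :: "('a \<Rightarrow> 'a \<Rightarrow> bool) \<Rightarrow> 'a \<Rightarrow> 'a \<Rightarrow> 'a set" where
  "interval E x y = {z. gdist E x z + gdist E z y = gdist E x y}"

definition median_graph :: "('a \<Rightarrow> 'a \<Rightarrow> bool) \<Rightarrow> bool" where
  "median_graph E \<longleftrightarrow>
     (\<forall>x y. E x y \<longrightarrow> E y x) \<and> (\<forall>x. \<not> E x x) \<and> (\<forall>x y. E\<^sup>*\<^sup>* x y) \<and>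
     (\<forall>x y z. \<exists>!m. m \<in> interval E x y \<inter> interval E y z \<inter> interval E x z)"

definition cat0_cube_complex :: "('a \<Rightarrow> 'a \<Rightarrow> bool) \<Rightarrow> bool" where
  "cat0_cube_complex E \<longleftrightarrow> median_graph E"

definition locally_finite :: "('a \<Rightarrow> 'a \<Rightarrow> bool) \<Rightarrow> bool" where
  "locally_finite E \<longleftrightarrow> (\<forall>x. finite {y. E x y})"

definition geod_closed :: "('a \<Rightarrow> 'a \<Rightarrow> bool) \<Rightarrow> 'a set \<Rightarrow> bool" where
  "geod_closed E Y \<longleftrightarrow> (\<forall>x\<in>Y. \<forall>y\<in>Y. interval E x y \<subseteq> Y)"

definition convex_sub :: "('a \<Rightarrow> 'a \<Rightarrow> bool) \<Rightarrow> 'a set \<Rightarrow> bool" where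
  "convex_sub E Y \<longleftrightarrow> Y \<noteq> {} \<and> geod_closed E Y"

definition convex_hull_sub :: "('a \<Rightarrow> 'a \<Rightarrow> bool) \<Rightarrow> 'a set \<Rightarrow> 'a set" where
  "convex_hull_sub E S = \<Inter>{C. geod_closed E C \<and> S \<subseteq> C}"

text \<open>Djokovic-Winkler relation on (oriented) edges; its classes are the hyperplanes.\<close>
definition theta :: "('a \<Rightarrow> 'a \<Rightarrow> bool) \<Rightarrow> 'a \<times> 'a \<Rightarrow> 'a \<times> 'a \<Rightarrow> bool" where
  "theta E e f \<longleftrightarrow>
     gdist E (fst e) (fst f) + gdist E (snd e) (snd f) \<noteq>
     gdist E (fst e) (snd f) + gdist E (snd e) (fst f)"

text \<open>The hyperplane dual to the edge (u,v): the set of (oriented) edges it crosses.\<close>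
definition hyperplane_of :: "('a \<Rightarrow> 'a \<Rightarrow> bool) \<Rightarrow> 'a \<Rightarrow> 'a \<Rightarrow> ('a \<times> 'a) set" where
  "hyperplane_of E u v = {f. E (fst f) (snd f) \<and> theta E (u, v) f}"

definition hyperplanes :: "('a \<Rightarrow> 'a \<Rightarrow> bool) \<Rightarrow> ('a \<times> 'a) set set" where
  "hyperplanes E = {hyperplane_of E u v | u v. E u v}"

text \<open>Hyperplane H intersects the convex subcomplex Y iff it crosses an edge of Y.\<close>
definition crosses :: "('a \<times> 'a) set \<Rightarrow> 'a set \<Rightarrow> bool" where
  "crosses H Y \<longleftrightarrow> (\<exists>f\<in>H. fst f \<in> Y \<and> snd f \<in> Y)"

definition parallel :: "('a \<Rightarrow> 'a \<Rightarrow> bool) \<Rightarrow> 'a set \<Rightarrow> 'a set \<Rightarrow> bool" where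
  "parallel E Y Z \<longleftrightarrow> (\<forall>H\<in>hyperplanes E. crosses H Y \<longleftrightarrow> crosses H Z)"

text \<open>Combinatorial hyperplane: the 0-cubes of the side of the carrier of the
hyperplane dual to (u,v) lying in the halfspace containing u.\<close>
definition comb_hyperplane :: "('a \<Rightarrow> 'a \<Rightarrow> bool) \<Rightarrow> 'a \<Rightarrow> 'a \<Rightarrow> 'a set" where
  "comb_hyperplane E u v =
     {x. (\<exists>y. (x, y) \<in> hyperplane_of E u v) \<and> gdist E x u < gdist E x v}"

definition comb_hyperplanes :: "('a \<Rightarrow> 'a \<Rightarrow> bool) \<Rightarrow> 'a set set" where
  "comb_hyperplanes E = {comb_hyperplane E u v | u v. E u v}"

definition gate :: "('a \<Rightarrow> 'a \<Rightarrow> bool) \<Rightarrow> 'a set \<Rightarrow> 'a \<Rightarrow> 'a" where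
  "gate E Y x = (THE y. y \<in> Y \<and> (\<forall>z\<in>Y. z \<noteq> y \<longrightarrow> gdist E x y < gdist E x z))"

inductive_set hyperclosure :: "('a \<Rightarrow> 'a \<Rightarrow> bool) \<Rightarrow> 'a set set"
  for E :: "'a \<Rightarrow> 'a \<Rightarrow> bool" where
  whole: "UNIV \<in> hyperclosure E"
| combhyp: "Y \<in> comb_hyperplanes E \<Longrightarrow> Y \<in> hyperclosure E"
| gate_img: "F \<in> hyperclosure E \<Longrightarrow> F' \<in> hyperclosure E \<Longrightarrow> gate E F ` F' \<in> hyperclosure E"
| par: "F \<in> hyperclosure E \<Longrightarrow> convex_sub E G \<Longrightarrow> parallel E F G \<Longrightarrow> G \<in> hyperclosure E"

definition parallel_hull :: "('a \<Rightarrow> 'a \<Rightarrow> bool) \<Rightarrow> 'a set \<Rightarrow> 'a set" where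
  "parallel_hull E A = convex_hull_sub E (\<Union>{B. convex_sub E B \<and> parallel E A B})"

text \<open>Orthogonal complement of A at a: phi_A({a} x A^perp) inside P_A = A x A^perp,
i.e. the fibre over a of the projection of P_A to the A-factor (= gate map to A).\<close>
definition orth_compl :: "('a \<Rightarrow> 'a \<Rightarrow> bool) \<Rightarrow> 'a set \<Rightarrow> 'a \<Rightarrow> 'a set" where
  "orth_compl E A a = {x \<in> parallel_hull E A. gate E A x = a}"

end

theory Submission
  imports Defs
begin

text \<open>Each hyperplane bounds two convex halfspaces,
and the distance of two vertices is the number of hyperplanes separating them.  Call two
hyperplanes transverse if all four quadrants they cut out are nonempty, and for a set K of
hyperplanes and a vertex c let orth K c be the set of vertices x such that every hyperplane
separating x from c is transverse to every member of K.  Helly's theorem for convex sets lets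
one move a vertex across any transverse splitting of its separating hyperplanes, and with
this:
\<^item> The hyperclosure consists exactly of the sets orth K c with K finite.  A combinatorial
  hyperplane is orth {H} u; a gate image or a parallel copy of such sets is again one, the new
  K collecting the hyperplanes separating mutual gates.  Conversely orth {H} c is reached from
  a combinatorial hyperplane by gate maps along a geodesic towards it, and orth K c is the
  intersection, i.e. an iterated gate image, of the orth {H} c.
\<^item> The parallel hull of C consists of the vertices whose hyperplanes separating them from C
  are transverse to all hyperplanes crossing C, so the orthogonal complement of C at c is
  orth K c with K the hyperplanes crossing C.
\<^item> For finite K, orth K c = orth K' c where K' is the set of hyperplanes separating c from
  finitely many vertices z, i.e. the hyperplanes crossing the convex hull of c and the z;
  that hull is finite by local finiteness.\<close>

locale cube_complex =
  fixes E :: "'a \<Rightarrow> 'a \<Rightarrow> bool"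
  assumes median_graph: "median_graph E"
begin

abbreviation d where "d \<equiv> gdist E"
abbreviation I where "I \<equiv> interval E"

section \<open>Distances, intervals and medians\<close>

lemma adj_sym: "E x y \<Longrightarrow> E y x"
  using median_graph unfolding median_graph_def by blast

lemma adj_irrefl: "\<not> E x x"
  using median_graph unfolding median_graph_def by blast

lemma adj_connected: "\<exists>n. (E ^^ n) x y"
  using median_graph unfolding median_graph_def by (blast intro: rtranclp_imp_relpowp)

lemma relpowp_gdist: "(E ^^ d x y) x y"
  unfolding gdist_def using adj_connected by (rule LeastI_ex)

lemma gdist_le: "(E ^^ n) x y \<Longrightarrow> d x y \<le> n"
  unfolding gdist_def by (rule Least_le)

lemma gdist_eq_0_iff [simp]: "d x y = 0 \<longleftrightarrow> x = y"
  using relpowp_gdist[of x y] gdist_le[of 0 x x] by auto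

lemma gdist_self [simp]: "d x x = 0"
  by simp

lemma relpowp_adj_sym: "(E ^^ n) x y \<Longrightarrow> (E ^^ n) y x"
proof (induction n arbitrary: y)
  case 0
  then show ?case by simp
next
  case (Suc n)
  then obtain z where "(E ^^ n) x z" "E z y" by (auto elim: relpowp_Suc_E)
  then have "(E ^^ n) z x" "E y z" using Suc.IH adj_sym by auto
  then show ?case by (meson relpowp_Suc_I2)
qed

lemma gdist_sym: "d x y = d y x"
  using gdist_le[OF relpowp_adj_sym[OF relpowp_gdist[of x y]]]
    gdist_le[OF relpowp_adj_sym[OF relpowp_gdist[of y x]]] by simp

lemma gdist_triangle: "d x z \<le> d x y + d y z"
  using gdist_le[OF relpowp_trans[OF relpowp_gdist[of x y] relpowp_gdist[of y z]]] .

lemma gdist_adj: "E x y \<Longrightarrow> d x y = 1"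
  using gdist_le[of 1 x y] adj_irrefl[of x] by (cases "d x y") auto

lemma adj_if_gdist_1: "d x y = 1 \<Longrightarrow> E x y"
  using relpowp_gdist[of x y] by (metis relpowp_1)

lemma gdist_Suc_neighbor:
  assumes "d x z = Suc n"
  shows "\<exists>y. E x y \<and> d y z = n"
proof -
  obtain y where y: "E x y" "(E ^^ n) y z"
    using relpowp_Suc_D2[OF relpowp_gdist[of x z, unfolded assms]] by blast
  have "d y z \<le> n" using y(2) by (rule gdist_le)
  moreover have "d x z \<le> d x y + d y z" by (rule gdist_triangle)
  ultimately show ?thesis using y gdist_adj[OF y(1)] assms by (intro exI[of _ y]) auto
qed

lemma step_towards:
  assumes "x \<noteq> z"
  shows "\<exists>x'. E x x' \<and> d x' z + 1 = d x z"
  using assms gdist_Suc_neighbor[of x z] by (cases "d x z") auto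

lemma gdist_adj_le: "E x x' \<Longrightarrow> d x' w \<le> Suc (d x w) \<and> d x w \<le> Suc (d x' w)"
  using gdist_triangle[of x' w x] gdist_triangle[of x w x'] gdist_adj adj_sym gdist_sym by simp

lemma mem_interval_iff: "z \<in> I x y \<longleftrightarrow> d x z + d z y = d x y"
  unfolding interval_def by simp

lemma interval_sym: "I x y = I y x"
  unfolding interval_def using gdist_sym by (auto simp: add.commute)

lemma left_mem_interval [simp]: "x \<in> I x y"
  by (simp add: mem_interval_iff)

lemma right_mem_interval [simp]: "y \<in> I x y"
  by (simp add: mem_interval_iff)

lemma median_ex1: "\<exists>!m. m \<in> I x y \<inter> I y z \<inter> I x z"
  using median_graph unfolding median_graph_def by blast

definition median where "median x y z = (THE m. m \<in> I x y \<inter> I y z \<inter> I x z)"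

lemma median_in_interval: "median x y z \<in> I x y" "median x y z \<in> I y z" "median x y z \<in> I x z"
  using theI'[OF median_ex1[of x y z]] unfolding median_def by auto

lemma median_unique: "m \<in> I x y \<Longrightarrow> m \<in> I y z \<Longrightarrow> m \<in> I x z \<Longrightarrow> m = median x y z"
  using median_ex1[of x y z] median_in_interval[of x y z] by blast

lemma interval_adj: "E a b \<Longrightarrow> I a b = {a, b}"
  using gdist_adj[of a b] by (auto simp: mem_interval_iff add_is_1)

lemma gdist_adj_neq:
  assumes e: "E a b"
  shows "d z a \<noteq> d z b"
proof
  assume eq: "d z a = d z b"
  let ?m = "median a b z"
  have "?m = a \<or> ?m = b" using median_in_interval(1)[of a b z] interval_adj[OF e] by auto
  then show False
  proof
    assume "?m = a"
    then have "d b a + d a z = d b z" using median_in_interval(2)[of a b z] by (simp add: mem_interval_iff)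
    then show False using eq gdist_adj[OF e] gdist_sym[of b a] gdist_sym[of a z] gdist_sym[of b z] by linarith
  next
    assume "?m = b"
    then have "d a b + d b z = d a z" using median_in_interval(3)[of a b z] by (simp add: mem_interval_iff)
    then show False using eq gdist_adj[OF e] gdist_sym[of b z] gdist_sym[of a z] by linarith
  qed
qed

lemma gdist_adj_Suc_cases:
  assumes "E a b"
  shows "d z b = Suc (d z a) \<or> d z a = Suc (d z b)"
proof -
  have "d a z \<le> Suc (d b z)" "d b z \<le> Suc (d a z)" using gdist_adj_le[OF assms] by auto
  then show ?thesis using gdist_adj_neq[OF assms, of z] gdist_sym[of z a] gdist_sym[of z b] by linarith
qed

section \<open>Halfspaces and hyperplanes\<close>

definition halfspace where "halfspace a b = {z. d z a < d z b}"

lemma not_halfspace_iff: "E a b \<Longrightarrow> z \<notin> halfspace a b \<longleftrightarrow> z \<in> halfspace b a"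
  unfolding halfspace_def using gdist_adj_Suc_cases[of a b z] by auto

lemma halfspace_gdist: "E a b \<Longrightarrow> z \<in> halfspace a b \<Longrightarrow> d z b = Suc (d z a)"
  unfolding halfspace_def using gdist_adj_Suc_cases[of a b z] by auto

lemma halfspace_self: "E a b \<Longrightarrow> a \<in> halfspace a b"
  unfolding halfspace_def using gdist_adj by simp

lemma halfspace_other: "E a b \<Longrightarrow> b \<notin> halfspace a b"
  unfolding halfspace_def using gdist_adj gdist_sym by simp

text \<open>Both median x y a and median x' y' a would equal median x y b, but they have different
distances to a.\<close>
lemma halfspace_square_impossible:
  assumes e: "E a b" and x': "E x x'" and y': "E y y'"
    and x: "x \<in> halfspace a b" and y: "y \<in> halfspace a b"
    and x'W: "x' \<in> halfspace b a" and y'W: "y' \<in> halfspace b a"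
    and dx'y': "d x' y' + 2 = d x y" and m2W: "median x' y' a \<in> halfspace b a"
  shows False
proof -
  have e': "E b a" using e adj_sym by simp
  define m2 where "m2 = median x' y' a"
  define m where "m = median x y a"
  have m2d: "d m2 a = Suc (d m2 b)" using halfspace_gdist[OF e' m2W] unfolding m2_def .
  have m2I: "d x' m2 + d m2 y' = d x' y'" "d y' m2 + d m2 a = d y' a" "d x' m2 + d m2 a = d x' a"
    using median_in_interval[of x' y' a] unfolding m2_def mem_interval_iff by auto
  have mI: "d x m + d m y = d x y" "d y m + d m a = d y a" "d x m + d m a = d x a"
    using median_in_interval[of x y a] unfolding m_def mem_interval_iff by auto
  have xd: "d x b = Suc (d x a)" "d y b = Suc (d y a)" using halfspace_gdist[OF e] x y by auto
  have x'd: "d x' a = Suc (d x' b)" "d y' a = Suc (d y' b)" using halfspace_gdist[OF e'] x'W y'W by auto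
  have adj: "d x' a \<le> Suc (d x a)" "d x a \<le> Suc (d x' a)" "d x' b \<le> Suc (d x b)" "d x b \<le> Suc (d x' b)"
    "d y' a \<le> Suc (d y a)" "d y a \<le> Suc (d y' a)" "d y' b \<le> Suc (d y b)" "d y b \<le> Suc (d y' b)"
    "d x m2 \<le> Suc (d x' m2)" "d y m2 \<le> Suc (d y' m2)"
    using gdist_adj_le[OF x'] gdist_adj_le[OF y'] by auto
  have sy: "d m2 y' = d y' m2" "d m y = d y m" "d m b = d b m" "d m2 b = d b m2" "d m2 y = d y m2"
    using gdist_sym by auto
  have mb: "d m b \<le> Suc (d m a)" using gdist_adj_le[OF e', of m] gdist_sym by simp
  have tri: "d x b \<le> d x m + d m b" "d y b \<le> d y m + d m b"
    "d x b \<le> d x m2 + d m2 b" "d y b \<le> d y m2 + d m2 b" "d x y \<le> d x m2 + d m2 y"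
    by (rule gdist_triangle)+
  have x'a: "d x' a = Suc (d x a)" "d y' a = Suc (d y a)" using x'd xd adj by linarith+
  have s1: "2 * d m2 a + d x' y' = d x' a + d y' a" using m2I sy by linarith
  have "m \<in> I x b" "m \<in> I y b" "m \<in> I x y" unfolding mem_interval_iff using mI xd mb tri by linarith+
  then have mm: "m = median x y b" using median_unique[of m x y b] interval_sym[of y b] by blast
  have m2b: "m2 \<in> I x b" "m2 \<in> I y b"
    unfolding mem_interval_iff using m2d m2I xd x'd adj tri sy by linarith+
  then have "d x m2 + d m2 b = d x b" "d y m2 + d m2 b = d y b" unfolding mem_interval_iff by auto
  then have "m2 \<in> I x y" unfolding mem_interval_iff using s1 x'a xd m2d dx'y' tri(5) sy by linarith
  then have "m2 = median x y b" using m2b median_unique[of m2 x y b] interval_sym[of y b] by blast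
  moreover have "d m a \<noteq> d m2 a" using s1 x'a mI sy dx'y' by linarith
  ultimately show False using mm by simp
qed

text \<open>In a minimal counterexample z \<in> I x y, moving x and y one step towards z produces the
configuration excluded above.\<close>
lemma halfspace_convex:
  assumes "E a b" "x \<in> halfspace a b" "y \<in> halfspace a b" "z \<in> I x y"
  shows "z \<in> halfspace a b"
  using assms
proof (induction "d x y" arbitrary: a b x y z rule: less_induct)
  case less
  note e = less.prems(1) and x = less.prems(2) and y = less.prems(3) and z = less.prems(4)
  show ?case
  proof (rule ccontr)
    assume zn: "z \<notin> halfspace a b"
    then have zx: "z \<noteq> x" "z \<noteq> y" using x y by auto
    have zI: "d x z + d z y = d x y" using z by (simp add: mem_interval_iff)
    obtain x' where x': "E x x'" "d x' z + 1 = d x z" using step_towards[of x z] zx by auto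
    obtain y' where y': "E y y'" "d y' z + 1 = d y z" using step_towards[of y z] zx by auto
    have tri: "d x y \<le> d x x' + d x' y" "d x' y \<le> d x' z + d z y" "d x y \<le> d x y' + d y' y"
      "d x y' \<le> d x z + d z y'" "d x' y \<le> d x' y' + d y' y" "d x' y' \<le> d x' z + d z y'"
      by (rule gdist_triangle)+
    have sy: "d z y' = d y' z" "d z y = d y z" "d y' y = d y y'" using gdist_sym by auto
    have ee: "d x x' = 1" "d y y' = 1" using gdist_adj x'(1) y'(1) by auto
    have zx'y: "z \<in> I x' y" "d x' y < d x y"
      unfolding mem_interval_iff using tri ee x' zI sy zx by linarith+
    have zxy': "z \<in> I x y'" "d x y' < d x y"
      unfolding mem_interval_iff using tri ee y' zI sy zx by linarith+
    have dx'y': "d x' y' + 2 = d x y" using tri ee x' y' zI sy zx by linarith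
    have x'W: "x' \<in> halfspace b a"
      using less.hyps[OF zx'y(2) e _ y zx'y(1)] zn not_halfspace_iff[OF e] by blast
    have y'W: "y' \<in> halfspace b a"
      using less.hyps[OF zxy'(2) e x _ zxy'(1)] zn not_halfspace_iff[OF e] by blast
    have "d x' y' < d x y" using dx'y' by simp
    then have "median x' y' a \<in> halfspace b a"
      using less.hyps[OF _ adj_sym[OF e] x'W y'W median_in_interval(1)] by blast
    then show False using halfspace_square_impossible[OF e x'(1) y'(1) x y x'W y'W dx'y'] by simp
  qed
qed

lemma halfspace_cut_subset:
  assumes e: "E a b" and e2: "E x y" and x: "x \<in> halfspace a b" and y: "y \<notin> halfspace a b"
    and z: "z \<in> halfspace a b"
  shows "z \<in> halfspace x y"
proof (rule ccontr)
  assume "z \<notin> halfspace x y"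
  then have "d z x = Suc (d z y)" using not_halfspace_iff[OF e2] halfspace_gdist[OF adj_sym[OF e2]] by simp
  then have "y \<in> I z x" unfolding mem_interval_iff using gdist_adj[OF adj_sym[OF e2]] by simp
  then show False using halfspace_convex[OF e z x] y by simp
qed

lemma halfspace_cut:
  assumes e: "E a b" and e2: "E x y" and x: "x \<in> halfspace a b" and y: "y \<notin> halfspace a b"
  shows "halfspace x y = halfspace a b"
proof
  show "halfspace a b \<subseteq> halfspace x y" using halfspace_cut_subset[OF e e2 x y] by blast
next
  have "y \<in> halfspace b a" "x \<notin> halfspace b a" using not_halfspace_iff[OF e] x y by auto
  then have "halfspace b a \<subseteq> halfspace y x"
    using halfspace_cut_subset[OF adj_sym[OF e] adj_sym[OF e2]] by blast
  then show "halfspace x y \<subseteq> halfspace a b" using not_halfspace_iff[OF e] not_halfspace_iff[OF e2] by blast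
qed

lemma theta_iff_halfspace:
  assumes e: "E u v" and e2: "E x y"
  shows "theta E (u, v) (x, y) \<longleftrightarrow> (x \<in> halfspace u v \<longleftrightarrow> y \<notin> halfspace u v)"
proof -
  have s: "d u x = d x u" "d v y = d y v" "d u y = d y u" "d v x = d x v" using gdist_sym by auto
  have "d x v = Suc (d x u) \<or> d x u = Suc (d x v)" "d y v = Suc (d y u) \<or> d y u = Suc (d y v)"
    using gdist_adj_Suc_cases[OF e] by auto
  moreover have "d x u \<le> Suc (d y u)" "d y u \<le> Suc (d x u)" "d x v \<le> Suc (d y v)" "d y v \<le> Suc (d x v)"
    using gdist_adj_le[OF e2] by auto
  ultimately show ?thesis unfolding theta_def halfspace_def using s by auto
qed

lemma hyperplane_of_eq:
  assumes "E u v"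
  shows "hyperplane_of E u v =
    {f. E (fst f) (snd f) \<and> (fst f \<in> halfspace u v \<longleftrightarrow> snd f \<notin> halfspace u v)}"
  unfolding hyperplane_of_def using theta_iff_halfspace[OF assms] by auto

lemma hyperplane_of_swap: "E u v \<Longrightarrow> hyperplane_of E v u = hyperplane_of E u v"
  using hyperplane_of_eq[of u v] hyperplane_of_eq[of v u] adj_sym[of u v]
    not_halfspace_iff[of u v] not_halfspace_iff[of v u] by auto

lemma edge_in_hyperplane_of: "E u v \<Longrightarrow> (u, v) \<in> hyperplane_of E u v"
  using hyperplane_of_eq halfspace_self halfspace_other by auto

text \<open>Every edge crossed by the hyperplane cuts off the same pair of halfspaces.\<close>
lemma hyperplane_of_edge:
  assumes e: "E u v" and f: "(x, y) \<in> hyperplane_of E u v"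
  shows "hyperplane_of E x y = hyperplane_of E u v"
proof -
  have e2: "E x y" and c: "x \<in> halfspace u v \<longleftrightarrow> y \<notin> halfspace u v"
    using f hyperplane_of_eq[OF e] by auto
  show ?thesis
  proof (cases "x \<in> halfspace u v")
    case True
    then have "halfspace x y = halfspace u v" using halfspace_cut[OF e e2] c by auto
    then show ?thesis using hyperplane_of_eq[OF e] hyperplane_of_eq[OF e2] by simp
  next
    case False
    have "x \<in> halfspace v u" "y \<notin> halfspace v u" using False c not_halfspace_iff[OF e] by auto
    then have "halfspace x y = halfspace v u" using halfspace_cut[OF adj_sym[OF e] e2] by simp
    then show ?thesis
      using hyperplane_of_eq[OF adj_sym[OF e]] hyperplane_of_eq[OF e2] hyperplane_of_swap[OF e] by simp
  qed
qed

abbreviation HP where "HP \<equiv> hyperplanes E"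

lemma mem_hyperplanes_iff: "H \<in> HP \<longleftrightarrow> (\<exists>u v. E u v \<and> H = hyperplane_of E u v)"
  unfolding hyperplanes_def by auto

lemma hyperplane_of_in_hyperplanes: "E u v \<Longrightarrow> hyperplane_of E u v \<in> HP"
  unfolding hyperplanes_def by auto

lemma hyperplane_oriented:
  assumes "H \<in> HP"
  obtains u v where "E u v" "H = hyperplane_of E u v" "c \<in> halfspace u v"
proof -
  obtain u v where uv: "E u v" "H = hyperplane_of E u v" using assms mem_hyperplanes_iff by auto
  show thesis
  proof (cases "c \<in> halfspace u v")
    case True
    then show thesis using that uv by blast
  next
    case False
    then show thesis
      using that[OF adj_sym[OF uv(1)]] uv hyperplane_of_swap[OF uv(1)] not_halfspace_iff[OF uv(1)] by simp
  qed
qed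

text \<open>hyp_halfspace H is one of the two halfspaces bounded by H, chosen via an arbitrary
dual edge; separates and transverse below do not depend on that choice.\<close>
definition hyp_rep where
  "hyp_rep H = (SOME p. E (fst p) (snd p) \<and> H = hyperplane_of E (fst p) (snd p))"

definition hyp_halfspace where "hyp_halfspace H = halfspace (fst (hyp_rep H)) (snd (hyp_rep H))"

definition separates where "separates H a b \<longleftrightarrow> (a \<in> hyp_halfspace H \<longleftrightarrow> b \<notin> hyp_halfspace H)"

lemma hyp_halfspace_cases:
  assumes e: "E u v"
  shows "hyp_halfspace (hyperplane_of E u v) = halfspace u v \<or>
    hyp_halfspace (hyperplane_of E u v) = halfspace v u"
proof -
  let ?H = "hyperplane_of E u v"
  obtain p1 p2 where pp: "hyp_rep ?H = (p1, p2)" by (cases "hyp_rep ?H")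
  have "E p1 p2" "?H = hyperplane_of E p1 p2"
    using someI_ex[of "\<lambda>p. E (fst p) (snd p) \<and> ?H = hyperplane_of E (fst p) (snd p)"] e pp
    unfolding hyp_rep_def by auto
  then have e2: "E p1 p2" and "(p1, p2) \<in> ?H" using edge_in_hyperplane_of by auto
  then have c: "p1 \<in> halfspace u v \<longleftrightarrow> p2 \<notin> halfspace u v" using hyperplane_of_eq[OF e] by auto
  show ?thesis
  proof (cases "p1 \<in> halfspace u v")
    case True
    then have "halfspace p1 p2 = halfspace u v" using halfspace_cut[OF e e2] c by auto
    then show ?thesis unfolding hyp_halfspace_def pp by simp
  next
    case False
    then have "p1 \<in> halfspace v u" "p2 \<notin> halfspace v u" using c not_halfspace_iff[OF e] by auto
    then have "halfspace p1 p2 = halfspace v u" using halfspace_cut[OF adj_sym[OF e] e2] by simp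
    then show ?thesis unfolding hyp_halfspace_def pp by simp
  qed
qed

lemma separates_hyperplane_of:
  "E u v \<Longrightarrow> separates (hyperplane_of E u v) a b \<longleftrightarrow> (a \<in> halfspace u v \<longleftrightarrow> b \<notin> halfspace u v)"
  using hyp_halfspace_cases not_halfspace_iff unfolding separates_def by blast

lemma separates_xor: "separates H a c \<longleftrightarrow> (separates H a b \<longleftrightarrow> \<not> separates H b c)"
  unfolding separates_def by auto

lemma separates_sym: "separates H a b \<longleftrightarrow> separates H b a"
  unfolding separates_def by auto

lemma separates_refl [simp]: "\<not> separates H a a"
  unfolding separates_def by auto

lemma mem_hyperplane_of_iff_separates:
  "E u v \<Longrightarrow> (x, y) \<in> hyperplane_of E u v \<longleftrightarrow> E x y \<and> separates (hyperplane_of E u v) x y"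
  using hyperplane_of_eq separates_hyperplane_of by auto

section \<open>Separating hyperplanes\<close>

definition seps where "seps a b = {H \<in> HP. separates H a b}"

lemma seps_sym: "seps a b = seps b a"
  unfolding seps_def using separates_sym by auto

lemma seps_self [simp]: "seps a a = {}"
  unfolding seps_def by auto

lemma seps_hyperplanes: "seps a b \<subseteq> HP"
  unfolding seps_def by auto

lemma mem_seps_xor: "H \<in> seps a c \<longleftrightarrow> H \<in> HP \<and> (H \<in> seps a b \<longleftrightarrow> H \<notin> seps b c)"
  unfolding seps_def using separates_xor by auto

lemma seps_symdiff: "seps x y = (seps x z - seps z y) \<union> (seps z y - seps x z)"
  using mem_seps_xor[of _ x y z] seps_hyperplanes by blast

lemma seps_triangle: "seps x y \<subseteq> seps x z \<union> seps z y"
  using seps_symdiff[of x y z] by blast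

lemma seps_adj:
  assumes e: "E a b"
  shows "seps a b = {hyperplane_of E a b}"
proof
  show "{hyperplane_of E a b} \<subseteq> seps a b"
    unfolding seps_def using hyperplane_of_in_hyperplanes[OF e] edge_in_hyperplane_of[OF e]
      mem_hyperplane_of_iff_separates[OF e] by auto
next
  show "seps a b \<subseteq> {hyperplane_of E a b}"
  proof
    fix H assume "H \<in> seps a b"
    then obtain u v where uv: "E u v" "H = hyperplane_of E u v" "separates H a b"
      unfolding seps_def mem_hyperplanes_iff by auto
    then have "(a, b) \<in> hyperplane_of E u v" using mem_hyperplane_of_iff_separates e by auto
    then show "H \<in> {hyperplane_of E a b}" using hyperplane_of_edge[OF uv(1)] uv by simp
  qed
qed

lemma seps_adj_insert:
  assumes e: "E a b" and nin: "hyperplane_of E a b \<notin> seps x a"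
  shows "seps x b = insert (hyperplane_of E a b) (seps x a)"
proof (rule set_eqI)
  fix H
  have "H \<in> seps x b \<longleftrightarrow> H \<in> HP \<and> (H \<in> seps x a \<longleftrightarrow> H \<notin> seps a b)"
    by (rule mem_seps_xor)
  then show "H \<in> seps x b \<longleftrightarrow> H \<in> insert (hyperplane_of E a b) (seps x a)"
    using seps_adj[OF e] nin hyperplane_of_in_hyperplanes[OF e] seps_hyperplanes[of x a] by auto
qed

text \<open>A geodesic from a to b crosses each hyperplane separating them exactly once.\<close>
lemma finite_seps_card: "finite (seps a b) \<and> card (seps a b) = d a b"
proof (induction "d a b" arbitrary: a)
  case 0
  then show ?case by simp
next
  case (Suc n)
  obtain a' where a': "E a a'" "d a' b = n" using gdist_Suc_neighbor Suc.hyps(2)[symmetric] by blast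
  let ?h = "hyperplane_of E a a'"
  have "a' \<in> I a b" unfolding mem_interval_iff using Suc.hyps(2) a' gdist_adj by simp
  then have "b \<notin> halfspace a a'"
    using halfspace_convex[OF a'(1) halfspace_self[OF a'(1)]] halfspace_other[OF a'(1)] by blast
  then have "?h \<notin> seps a' b"
    using separates_hyperplane_of[OF a'(1)] halfspace_other[OF a'(1)] unfolding seps_def by auto
  then have "seps b a = insert ?h (seps b a')"
    using seps_adj_insert[OF adj_sym[OF a'(1)], of b] hyperplane_of_swap[OF a'(1)] seps_sym[of b] by simp
  then show ?case using Suc.hyps(1)[OF a'(2)[symmetric]] \<open>?h \<notin> seps a' b\<close> Suc.hyps(2) a'(2) seps_sym by auto
qed

lemma finite_seps: "finite (seps a b)"
  using finite_seps_card by blast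

lemma gdist_eq_card_seps: "d a b = card (seps a b)"
  using finite_seps_card by metis

lemma seps_empty_iff: "seps a b = {} \<longleftrightarrow> a = b"
  using gdist_eq_card_seps[of a b] finite_seps[of a b] by auto

lemma mem_interval_iff_seps: "z \<in> I x y \<longleftrightarrow> seps x z \<inter> seps z y = {}"
proof
  assume "z \<in> I x y"
  then have "card (seps x z) + card (seps z y) = card (seps x y)"
    unfolding mem_interval_iff gdist_eq_card_seps .
  moreover have "card (seps x y) \<le> card (seps x z \<union> seps z y)"
    using seps_triangle finite_seps by (metis card_mono finite_UnI)
  ultimately have "card (seps x z \<inter> seps z y) = 0"
    using card_Un_Int[OF finite_seps finite_seps, of x z z y] by linarith
  then show "seps x z \<inter> seps z y = {}" using finite_seps by simp
next
  assume "seps x z \<inter> seps z y = {}"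
  then have "seps x y = seps x z \<union> seps z y" using seps_symdiff[of x y z] by blast
  then show "z \<in> I x y" unfolding mem_interval_iff gdist_eq_card_seps
    using card_Un_disjoint[OF finite_seps finite_seps] \<open>seps x z \<inter> seps z y = {}\<close> by simp
qed

lemma mem_interval_iff_separates:
  "z \<in> I x y \<longleftrightarrow> (\<forall>H\<in>HP. \<not> (separates H x z \<and> separates H z y))"
  unfolding mem_interval_iff_seps seps_def by auto

lemma seps_interval_Un: "z \<in> I x y \<Longrightarrow> seps x y = seps x z \<union> seps z y"
  using mem_interval_iff_seps seps_symdiff[of x y z] by blast

lemma seps_Un_disjoint: "seps x p \<inter> seps p q = {} \<Longrightarrow> seps x q = seps x p \<union> seps p q"
  using seps_symdiff[of x q p] by blast

lemma seps_interval_subset: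
  assumes "z \<in> I x y"
  shows "seps z c \<subseteq> seps x c \<union> seps y c"
proof
  fix H assume "H \<in> seps z c"
  moreover have "\<not> (separates H x z \<and> separates H z y)"
    using assms \<open>H \<in> seps z c\<close> unfolding mem_interval_iff_separates seps_def by auto
  ultimately show "H \<in> seps x c \<union> seps y c" unfolding seps_def separates_def by auto
qed

section \<open>Convex sets, gates and the Helly property\<close>

definition side where "side H x = {z. \<not> separates H x z}"

lemma side_self [simp]: "x \<in> side H x"
  unfolding side_def by simp

lemma geod_closed_iff: "geod_closed E Y \<longleftrightarrow> (\<forall>x\<in>Y. \<forall>y\<in>Y. I x y \<subseteq> Y)"
  unfolding geod_closed_def by simp

lemma convex_sub_geod_closed: "convex_sub E C \<Longrightarrow> geod_closed E C"
  unfolding convex_sub_def by simp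

lemma geod_closed_side: "H \<in> HP \<Longrightarrow> geod_closed E (side H x)"
  unfolding geod_closed_iff side_def using mem_interval_iff_separates separates_xor by blast

lemma geod_closed_Int: "geod_closed E A \<Longrightarrow> geod_closed E B \<Longrightarrow> geod_closed E (A \<inter> B)"
  unfolding geod_closed_iff by blast

lemma geod_closed_interval: "geod_closed E (I x y)"
  unfolding geod_closed_iff
proof (intro ballI subsetI)
  fix z1 z2 w assume "z1 \<in> I x y" "z2 \<in> I x y" "w \<in> I z1 z2"
  then show "w \<in> I x y"
    unfolding mem_interval_iff_separates separates_def by meson
qed

lemma convex_hull_sub_least: "geod_closed E Y \<Longrightarrow> S \<subseteq> Y \<Longrightarrow> convex_hull_sub E S \<subseteq> Y"
  unfolding convex_hull_sub_def by blast

lemma convex_hull_sub_superset: "S \<subseteq> convex_hull_sub E S"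
  unfolding convex_hull_sub_def by blast

lemma geod_closed_convex_hull_sub: "geod_closed E (convex_hull_sub E S)"
  unfolding convex_hull_sub_def geod_closed_iff by blast

lemma gate_ex:
  assumes Y: "convex_sub E Y"
  shows "\<exists>g\<in>Y. \<forall>z\<in>Y. g \<in> I x z"
proof -
  obtain y0 where "y0 \<in> Y" using Y unfolding convex_sub_def by auto
  then obtain g where g: "g \<in> Y" "\<forall>z. z \<in> Y \<longrightarrow> d x g \<le> d x z"
    using ex_has_least_nat[of "\<lambda>z. z \<in> Y" y0 "d x"] by blast
  have "g \<in> I x z" if z: "z \<in> Y" for z
  proof -
    let ?m = "median x g z"
    have "?m \<in> Y"
      using median_in_interval(2)[of x g z] Y g(1) z unfolding convex_sub_def geod_closed_iff by blast
    then have "d x g \<le> d x ?m" using g by blast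
    moreover have "d x ?m + d ?m g = d x g"
      using median_in_interval(1)[of x g z] unfolding mem_interval_iff .
    ultimately have "d ?m g = 0" by linarith
    then have "?m = g" by simp
    then show ?thesis using median_in_interval(3)[of x g z] by simp
  qed
  then show ?thesis using g by blast
qed

lemma gate_eqI:
  assumes Y: "convex_sub E Y" and g: "g \<in> Y" and gI: "\<forall>z\<in>Y. g \<in> I x z"
  shows "gate E Y x = g"
  unfolding gate_def
proof (rule the_equality)
  show P: "g \<in> Y \<and> (\<forall>z\<in>Y. z \<noteq> g \<longrightarrow> d x g < d x z)"
  proof (intro conjI ballI impI)
    fix z assume "z \<in> Y" "z \<noteq> g"
    then have "d x g + d g z = d x z" "d g z \<noteq> 0" using gI unfolding mem_interval_iff by auto
    then show "d x g < d x z" by linarith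
  qed (rule g)
  fix y assume "y \<in> Y \<and> (\<forall>z\<in>Y. z \<noteq> y \<longrightarrow> d x y < d x z)"
  then show "y = g" using P by (metis less_asym)
qed

lemma gate_in: "convex_sub E Y \<Longrightarrow> gate E Y x \<in> Y"
  using gate_ex[of Y x] gate_eqI[of Y _ x] by blast

lemma gate_in_interval: "convex_sub E Y \<Longrightarrow> z \<in> Y \<Longrightarrow> gate E Y x \<in> I x z"
  using gate_ex[of Y x] gate_eqI[of Y _ x] by blast

lemma gate_ident: "convex_sub E Y \<Longrightarrow> x \<in> Y \<Longrightarrow> gate E Y x = x"
  by (rule gate_eqI) auto

lemma separates_gate_iff:
  assumes Y: "convex_sub E Y" and H: "H \<in> HP"
  shows "separates H x (gate E Y x) \<longleftrightarrow> (\<forall>z\<in>Y. separates H x z)"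
proof
  assume s: "separates H x (gate E Y x)"
  show "\<forall>z\<in>Y. separates H x z"
  proof
    fix z assume "z \<in> Y"
    then have "\<not> separates H (gate E Y x) z"
      using gate_in_interval[OF Y] H s unfolding mem_interval_iff_separates by blast
    then show "separates H x z" using s separates_xor by blast
  qed
qed (use gate_in[OF Y] in blast)

lemma mem_seps_gate_iff:
  "convex_sub E Y \<Longrightarrow> H \<in> seps x (gate E Y x) \<longleftrightarrow> H \<in> HP \<and> (\<forall>z\<in>Y. separates H x z)"
  using separates_gate_iff unfolding seps_def by auto

lemma seps_gate_subset:
  assumes Y: "convex_sub E Y"
  shows "seps (gate E Y a) (gate E Y b) \<subseteq> seps a b"
proof
  fix H assume H: "H \<in> seps (gate E Y a) (gate E Y b)"
  have "gate E Y a \<in> I a (gate E Y b)" "gate E Y b \<in> I b (gate E Y a)"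
    using gate_in_interval[OF Y gate_in[OF Y]] by blast+
  then have "\<not> separates H a (gate E Y a)" "\<not> separates H b (gate E Y b)"
    using H unfolding mem_interval_iff_separates seps_def by (auto simp: separates_sym)
  then show "H \<in> seps a b" using H unfolding seps_def separates_def by blast
qed

lemma gate_image_Int:
  assumes Y: "convex_sub E Y" and Z: "convex_sub E Z" and w: "w \<in> Y \<inter> Z"
  shows "gate E Y ` Z = Y \<inter> Z"
proof
  show "gate E Y ` Z \<subseteq> Y \<inter> Z"
  proof
    fix g assume "g \<in> gate E Y ` Z"
    then obtain z where z: "z \<in> Z" "g = gate E Y z" by blast
    have "g \<in> Y" "g \<in> I z w" using gate_in[OF Y] gate_in_interval[OF Y] z w by auto
    then show "g \<in> Y \<inter> Z" using Z z(1) w unfolding convex_sub_def geod_closed_iff by blast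
  qed
  show "Y \<inter> Z \<subseteq> gate E Y ` Z"
    using gate_ident[OF Y] by force
qed

text \<open>A pair of vertices at minimal distance between two convex sets are each other's gates.\<close>
lemma mutual_gates_ex:
  assumes F1: "convex_sub E F1" and F2: "convex_sub E F2"
  obtains p q where "p \<in> F1" "q \<in> F2" "gate E F2 p = q" "gate E F1 q = p"
proof -
  obtain a b where ab: "a \<in> F1" "b \<in> F2" using F1 F2 unfolding convex_sub_def by blast
  obtain pq where pq: "fst pq \<in> F1 \<and> snd pq \<in> F2"
    "\<forall>r. fst r \<in> F1 \<and> snd r \<in> F2 \<longrightarrow> d (fst pq) (snd pq) \<le> d (fst r) (snd r)"
    using ex_has_least_nat[of "\<lambda>r. fst r \<in> F1 \<and> snd r \<in> F2" "(a, b)" "\<lambda>r. d (fst r) (snd r)"] ab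
    by auto
  obtain p q where pq': "pq = (p, q)" by (cases pq)
  have in1: "p \<in> F1" "q \<in> F2" using pq(1) pq' by auto
  have mn: "\<And>p' q'. p' \<in> F1 \<Longrightarrow> q' \<in> F2 \<Longrightarrow> d p q \<le> d p' q'"
    using pq(2) pq' by (metis fst_conv snd_conv)
  have "gate E F2 p \<in> I p q" "d p q \<le> d p (gate E F2 p)"
    using gate_in[OF F2] gate_in_interval[OF F2] in1 mn by auto
  then have "d (gate E F2 p) q = 0" unfolding mem_interval_iff by linarith
  then have "gate E F2 p = q" by simp
  moreover have "gate E F1 q \<in> I q p" "d p q \<le> d (gate E F1 q) q"
    using gate_in[OF F1] gate_in_interval[OF F1] in1 mn by auto
  then have "d (gate E F1 q) p = 0"
    unfolding mem_interval_iff using gdist_sym[of q "gate E F1 q"] gdist_sym[of p q] by linarith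
  then have "gate E F1 q = p" by simp
  ultimately show thesis using that in1 by blast
qed

lemma separated_edge_ex:
  assumes Y: "geod_closed E Y" and "a \<in> Y" "b \<in> Y" "separates H a b"
  shows "\<exists>w w'. w \<in> Y \<and> w' \<in> Y \<and> E w w' \<and> separates H w w'"
  using assms(2-4)
proof (induction "d a b" arbitrary: a)
  case 0
  then show ?case by simp
next
  case (Suc n)
  obtain a' where a': "E a a'" "d a' b = n" using gdist_Suc_neighbor Suc.hyps(2)[symmetric] by blast
  have "a' \<in> I a b" unfolding mem_interval_iff using a' Suc.hyps(2) gdist_adj by simp
  then have a'Y: "a' \<in> Y" using Y Suc.prems(1,2) unfolding geod_closed_iff by blast
  show ?case
  proof (cases "separates H a a'")
    case True
    then show ?thesis using Suc.prems(1) a'Y a'(1) by blast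
  next
    case False
    then have "separates H a' b" using Suc.prems(3) separates_xor by blast
    then show ?thesis using Suc.hyps(1)[OF a'(2)[symmetric] a'Y Suc.prems(2)] by blast
  qed
qed

lemma crosses_iff:
  assumes Y: "geod_closed E Y" and H: "H \<in> HP"
  shows "crosses H Y \<longleftrightarrow> (\<exists>a\<in>Y. \<exists>b\<in>Y. separates H a b)"
proof -
  obtain u v where uv: "E u v" "H = hyperplane_of E u v" using H mem_hyperplanes_iff by auto
  have "crosses H Y \<longleftrightarrow> (\<exists>w\<in>Y. \<exists>w'\<in>Y. E w w' \<and> separates H w w')"
    unfolding crosses_def uv(2) using mem_hyperplane_of_iff_separates[OF uv(1)] by force
  then show ?thesis using separated_edge_ex[OF Y] by blast
qed

definition crossing where "crossing Y = {H \<in> HP. crosses H Y}"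

lemma crossing_hyperplanes: "crossing C \<subseteq> HP"
  unfolding crossing_def by auto

lemma mem_crossing_iff:
  "geod_closed E Y \<Longrightarrow> H \<in> crossing Y \<longleftrightarrow> H \<in> HP \<and> (\<exists>a\<in>Y. \<exists>b\<in>Y. separates H a b)"
  unfolding crossing_def using crosses_iff by auto

lemma seps_subset_crossing: "geod_closed E Y \<Longrightarrow> a \<in> Y \<Longrightarrow> b \<in> Y \<Longrightarrow> seps a b \<subseteq> crossing Y"
  using mem_crossing_iff unfolding seps_def by blast

lemma parallel_crossing_eq: "parallel E Y Z \<Longrightarrow> crossing Y = crossing Z"
  unfolding parallel_def crossing_def by auto

lemma finite_crossing:
  assumes "finite C"
  shows "finite (crossing C)"
proof -
  have "crossing C \<subseteq> (\<lambda>(u, v). hyperplane_of E u v) ` (C \<times> C)"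
  proof
    fix H assume H: "H \<in> crossing C"
    then obtain x y where f: "(x, y) \<in> H" "x \<in> C" "y \<in> C" unfolding crossing_def crosses_def by auto
    obtain u v where uv: "E u v" "H = hyperplane_of E u v" using H mem_hyperplanes_iff crossing_def by auto
    then have "H = hyperplane_of E x y" using hyperplane_of_edge f(1) by simp
    then show "H \<in> (\<lambda>(u, v). hyperplane_of E u v) ` (C \<times> C)" using f by auto
  qed
  then show ?thesis using assms by (meson finite_SigmaI finite_imageI finite_subset)
qed

lemma helly:
  assumes "finite \<F>" "\<F> \<noteq> {}" "\<forall>A\<in>\<F>. geod_closed E A" "\<forall>A\<in>\<F>. \<forall>B\<in>\<F>. A \<inter> B \<noteq> {}"
  shows "\<Inter>\<F> \<noteq> {}"
  using assms
proof (induction "card \<F>" arbitrary: \<F> rule: less_induct)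
  case less
  then obtain A where A: "A \<in> \<F>" by blast
  show ?case
  proof (cases "\<F> = {A}")
    case True
    then show ?thesis using less.prems(4) by auto
  next
    case False
    let ?G = "(\<inter>) A ` (\<F> - {A})"
    have card: "card ?G < card \<F>"
      using card_image_le[OF finite_Diff[OF less.prems(1)], of "(\<inter>) A" "{A}"]
        card_Diff1_less[OF less.prems(1) A] by (rule le_less_trans)
    have nonempty: "\<F> - {A} \<noteq> {}" using False A by blast
    have closed: "\<forall>B\<in>?G. geod_closed E B" using less.prems(3) A by (auto intro: geod_closed_Int)
    have meet: "\<forall>B\<in>?G. \<forall>C\<in>?G. B \<inter> C \<noteq> {}"
    proof (intro ballI)
      fix B' C' assume "B' \<in> ?G" "C' \<in> ?G"
      then obtain B C where BC: "B \<in> \<F>" "C \<in> \<F>" "B' = A \<inter> B" "C' = A \<inter> C" by blast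
      have "A \<inter> B \<noteq> {}" "B \<inter> C \<noteq> {}" "A \<inter> C \<noteq> {}" using less.prems(4) A BC(1,2) by auto
      then obtain a b c where abc: "a \<in> A \<inter> B" "b \<in> B \<inter> C" "c \<in> A \<inter> C" by blast
      have "geod_closed E A" "geod_closed E B" "geod_closed E C" using less.prems(3) A BC(1,2) by auto
      then have "median a b c \<in> A \<inter> B \<inter> C"
        using median_in_interval[of a b c] abc unfolding geod_closed_iff by blast
      then show "B' \<inter> C' \<noteq> {}" using BC(3,4) by blast
    qed
    have "\<Inter>?G \<noteq> {}"
      using less.hyps[OF card _ _ closed meet] less.prems(1) nonempty by simp
    moreover have "\<Inter>?G = A \<inter> \<Inter>(\<F> - {A})" using nonempty by blast
    moreover have "A \<inter> \<Inter>(\<F> - {A}) = \<Inter>\<F>" using A by blast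
    ultimately show ?thesis by simp
  qed
qed

section \<open>Transverse hyperplanes\<close>

definition transverse where
  "transverse H K \<longleftrightarrow> (\<forall>\<alpha> \<beta>. \<exists>z. (z \<in> hyp_halfspace H \<longleftrightarrow> \<alpha>) \<and> (z \<in> hyp_halfspace K \<longleftrightarrow> \<beta>))"

lemma transverse_irrefl: "\<not> transverse H H"
  unfolding transverse_def by blast

lemma transverse_sym: "transverse H K \<Longrightarrow> transverse K H"
  unfolding transverse_def by blast

lemma transverseI:
  assumes "separates H a1 a2" "separates H b1 b2" "separates K a1 b1"
    "\<not> separates K a1 a2" "\<not> separates K b1 b2"
  shows "transverse H K"
proof -
  have "\<forall>\<alpha> \<beta>. \<exists>z\<in>{a1, a2, b1, b2}. (z \<in> hyp_halfspace H \<longleftrightarrow> \<alpha>) \<and> (z \<in> hyp_halfspace K \<longleftrightarrow> \<beta>)"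
    using assms unfolding separates_def by auto
  then show ?thesis unfolding transverse_def by blast
qed

lemma transverse_sides_meet: "transverse H K \<Longrightarrow> \<exists>z. z \<in> side H x \<and> z \<in> side K y"
  unfolding transverse_def side_def separates_def by blast

lemma sides_interval_meet:
  assumes A: "finite A" "A \<subseteq> HP" and B: "finite B" "B \<subseteq> HP"
    and tr: "\<forall>h\<in>A. \<forall>k\<in>B. transverse h k"
  obtains y where "y \<in> I x b" "\<forall>h\<in>A. y \<in> side h x" "\<forall>k\<in>B. y \<in> side k b"
proof -
  let ?F = "{I x b} \<union> (\<lambda>h. side h x) ` A \<union> (\<lambda>k. side k b) ` B"
  have "\<Inter>?F \<noteq> {}"
  proof (rule helly)
    show "finite ?F" using A B by simp
    show "\<forall>C\<in>?F. geod_closed E C" using geod_closed_interval geod_closed_side A B by auto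
    have pt: "\<exists>z. z \<in> side h x \<and> z \<in> side k b" if "h \<in> A" "k \<in> B" for h k
      using tr transverse_sides_meet that by blast
    show "\<forall>C\<in>?F. \<forall>D\<in>?F. C \<inter> D \<noteq> {}"
    proof (intro ballI)
      fix C D assume "C \<in> ?F" "D \<in> ?F"
      then have "C = I x b \<or> (\<exists>h\<in>A. C = side h x) \<or> (\<exists>k\<in>B. C = side k b)"
        "D = I x b \<or> (\<exists>h\<in>A. D = side h x) \<or> (\<exists>k\<in>B. D = side k b)" by blast+
      then have "\<exists>z. z \<in> C \<and> z \<in> D"
      proof (elim disjE bexE)
      qed (use pt side_self left_mem_interval[of x b] right_mem_interval[of b x] in \<open>blast+\<close>)
      then show "C \<inter> D \<noteq> {}" by blast
    qed
  qed simp
  then obtain y where y: "y \<in> \<Inter>?F" by blast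
  show thesis
  proof (rule that)
    show "y \<in> I x b" using y by blast
    show "\<forall>h\<in>A. y \<in> side h x" "\<forall>k\<in>B. y \<in> side k b" using y by auto
  qed
qed

lemma split_point:
  assumes AB: "A \<union> B = seps x b" "A \<inter> B = {}" and tr: "\<forall>h\<in>A. \<forall>k\<in>B. transverse h k"
  shows "\<exists>y. seps x y = B \<and> seps y b = A"
proof -
  have "finite A" "finite B" using AB(1) finite_seps[of x b] by (metis finite_Un)+
  moreover have "A \<subseteq> HP" "B \<subseteq> HP" using AB(1) seps_hyperplanes[of x b] by auto
  ultimately obtain y where y: "y \<in> I x b" "\<forall>h\<in>A. y \<in> side h x" "\<forall>k\<in>B. y \<in> side k b"
    using sides_interval_meet[of A B x b] tr by blast
  have sxb: "seps x b = seps x y \<union> seps y b" "seps x y \<inter> seps y b = {}"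
    using seps_interval_Un[OF y(1)] y(1) mem_interval_iff_seps by auto
  have "seps x y \<inter> A = {}" "seps y b \<inter> B = {}"
    using y(2,3) unfolding side_def seps_def by (auto simp: separates_sym)
  then have "seps x y = B" "seps y b = A" using sxb AB by blast+
  then show ?thesis by blast
qed

section \<open>The sets orth K c\<close>

definition orth where "orth K c = {x. \<forall>H\<in>seps x c. \<forall>k\<in>K. transverse H k}"

lemma orth_base [simp]: "c \<in> orth K c"
  unfolding orth_def by simp

lemma orth_antimono: "K \<subseteq> K' \<Longrightarrow> orth K' c \<subseteq> orth K c"
  unfolding orth_def by blast

lemma orth_Un: "orth (K \<union> K') c = orth K c \<inter> orth K' c"
  unfolding orth_def by blast

lemma orth_empty: "orth {} c = UNIV"
  unfolding orth_def by simp

lemma orth_insert: "orth (insert k K) c = orth {k} c \<inter> orth K c"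
  unfolding orth_def by blast

lemma geod_closed_orth: "geod_closed E (orth K c)"
  unfolding geod_closed_iff
proof (intro ballI subsetI)
  fix x y z assume "x \<in> orth K c" "y \<in> orth K c" "z \<in> I x y"
  then show "z \<in> orth K c" using seps_interval_subset[of z x y c] unfolding orth_def by blast
qed

lemma convex_orth: "convex_sub E (orth K c)"
  unfolding convex_sub_def using geod_closed_orth orth_base by blast

lemma seps_orth_transverse:
  "x \<in> orth K c \<Longrightarrow> y \<in> orth K c \<Longrightarrow> H \<in> seps x y \<Longrightarrow> k \<in> K \<Longrightarrow> transverse H k"
  unfolding orth_def using seps_triangle[of x y c] seps_sym[of c y] by blast

lemma orth_rebase:
  assumes x: "x \<in> orth K c"
  shows "orth K x = orth K c"
proof
  show "orth K x \<subseteq> orth K c"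
  proof
    fix z assume "z \<in> orth K x"
    then show "z \<in> orth K c" using x seps_triangle[of z c x] unfolding orth_def by blast
  qed
  show "orth K c \<subseteq> orth K x"
  proof
    fix z assume "z \<in> orth K c"
    then show "z \<in> orth K x" using x seps_triangle[of z x c] seps_sym[of c x] unfolding orth_def by blast
  qed
qed

lemma orth_not_seps: "x \<in> orth K c \<Longrightarrow> k \<in> K \<Longrightarrow> k \<notin> seps x c"
  unfolding orth_def using transverse_irrefl by blast

lemma mem_comb_hyperplane_iff:
  "x \<in> comb_hyperplane E u v \<longleftrightarrow> (\<exists>y. (x, y) \<in> hyperplane_of E u v) \<and> x \<in> halfspace u v"
  unfolding comb_hyperplane_def halfspace_def by simp

lemma comb_hyperplane_subset_orth:
  assumes e: "E u v"
  shows "comb_hyperplane E u v \<subseteq> orth {hyperplane_of E u v} u"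
proof
  let ?k = "hyperplane_of E u v"
  fix x assume "x \<in> comb_hyperplane E u v"
  then obtain x' where xx: "(x, x') \<in> ?k" and xW: "x \<in> halfspace u v"
    using mem_comb_hyperplane_iff by blast
  have ex: "E x x'" and x'W: "x' \<notin> halfspace u v" using xx xW hyperplane_of_eq[OF e] by auto
  have nk: "\<not> separates ?k x u" using separates_hyperplane_of[OF e] xW halfspace_self[OF e] by simp
  have k: "separates ?k x x'" "\<not> separates ?k x' v"
    using separates_hyperplane_of[OF e] xW x'W halfspace_other[OF e] by auto
  have "transverse H ?k" if H: "H \<in> seps x u" for H
  proof -
    have sH: "separates H x u" "H \<in> HP" using H unfolding seps_def by auto
    then have "H \<noteq> ?k" using nk by auto
    then have "\<not> separates H x x'" "\<not> separates H u v"
      using seps_adj[OF ex] seps_adj[OF e] hyperplane_of_edge[OF e xx] sH(2) unfolding seps_def by auto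
    then have "separates H x' v" using sH(1) unfolding separates_def by blast
    then show ?thesis using transverseI[of H x u x' v ?k] sH(1) nk k by blast
  qed
  then show "x \<in> orth {?k} u" unfolding orth_def by blast
qed

lemma orth_subset_comb_hyperplane:
  assumes e: "E u v"
  shows "orth {hyperplane_of E u v} u \<subseteq> comb_hyperplane E u v"
proof
  let ?k = "hyperplane_of E u v"
  fix x assume x: "x \<in> orth {?k} u"
  have nk: "?k \<notin> seps x u" using orth_not_seps[OF x] by simp
  then have xW: "x \<in> halfspace u v"
    using separates_hyperplane_of[OF e] halfspace_self[OF e] hyperplane_of_in_hyperplanes[OF e]
    unfolding seps_def by auto
  have "\<exists>y. seps x y = {?k} \<and> seps y v = seps x u"
    by (rule split_point) (use seps_adj_insert[OF e nk] nk x in \<open>auto simp: orth_def\<close>)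
  then obtain y where y: "seps x y = {?k}" by blast
  then have "E x y" using gdist_eq_card_seps adj_if_gdist_1 by simp
  moreover have "separates ?k x y" using y unfolding seps_def by auto
  ultimately have "(x, y) \<in> ?k" using mem_hyperplane_of_iff_separates[OF e] by auto
  then show "x \<in> comb_hyperplane E u v" using mem_comb_hyperplane_iff xW by blast
qed

lemma comb_hyperplane_eq_orth: "E u v \<Longrightarrow> comb_hyperplane E u v = orth {hyperplane_of E u v} u"
  using comb_hyperplane_subset_orth orth_subset_comb_hyperplane by blast

lemma convex_comb_hyperplane: "E u v \<Longrightarrow> convex_sub E (comb_hyperplane E u v)"
  using comb_hyperplane_eq_orth convex_orth by simp

lemma transverse_comb_side:
  assumes e: "E u v" and H: "H \<in> HP" and tr: "transverse H (hyperplane_of E u v)"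
  shows "\<exists>z\<in>comb_hyperplane E u v. \<not> separates H p z"
proof -
  let ?k = "hyperplane_of E u v"
  obtain a where a: "a \<in> side H p" "a \<in> side ?k u" using transverse_sides_meet[OF tr] by blast
  obtain b where b: "b \<in> side H p" "b \<in> side ?k v" using transverse_sides_meet[OF tr] by blast
  have "separates ?k u v"
    using separates_hyperplane_of[OF e] halfspace_self[OF e] halfspace_other[OF e] by simp
  then have "separates ?k a b" using a(2) b(2) unfolding side_def separates_def by blast
  then obtain w w' where w: "w \<in> side H p" "w' \<in> side H p" "E w w'" "separates ?k w w'"
    using separated_edge_ex geod_closed_side[OF H] a(1) b(1) by blast
  then have "(w, w') \<in> ?k" "(w', w) \<in> ?k"
    using mem_hyperplane_of_iff_separates[OF e] adj_sym separates_sym by auto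
  then have "w \<in> comb_hyperplane E u v \<or> w' \<in> comb_hyperplane E u v"
    using mem_comb_hyperplane_iff w(4) separates_hyperplane_of[OF e] by blast
  then show ?thesis using w(1,2) unfolding side_def by blast
qed

lemma transverse_crosses_comb:
  assumes e: "E u v" and H: "H \<in> HP" and tr: "transverse H (hyperplane_of E u v)"
  shows "\<exists>z1\<in>comb_hyperplane E u v. \<exists>z2\<in>comb_hyperplane E u v. separates H z1 z2"
proof -
  obtain q where q: "separates H u q" using tr unfolding transverse_def separates_def by blast
  obtain z1 z2 where "z1 \<in> comb_hyperplane E u v" "\<not> separates H u z1"
    "z2 \<in> comb_hyperplane E u v" "\<not> separates H q z2"
    using transverse_comb_side[OF e H tr] by meson
  then show ?thesis using q unfolding separates_def by blast
qed

section \<open>Hyperplane description of the hyperclosure\<close>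

lemma comb_hyperplane_in_hyperclosure: "E u v \<Longrightarrow> comb_hyperplane E u v \<in> hyperclosure E"
  by (rule hyperclosure.combhyp) (auto simp: comb_hyperplanes_def)

lemma not_transverse_seps_gate_comb:
  assumes e: "E u v" and s: "s \<in> seps c (gate E (comb_hyperplane E u v) c)"
  shows "\<not> transverse s (hyperplane_of E u v)"
proof
  assume "transverse s (hyperplane_of E u v)"
  then obtain z1 z2 where "z1 \<in> comb_hyperplane E u v" "z2 \<in> comb_hyperplane E u v" "separates s z1 z2"
    using transverse_crosses_comb[OF e] s seps_hyperplanes by blast
  then show False
    using s mem_seps_gate_iff[OF convex_comb_hyperplane[OF e]] unfolding separates_def by blast
qed

lemma orth_hyperplane_subset_orth_seps_gate:
  assumes e: "E u v"
  shows "orth {hyperplane_of E u v} c \<subseteq> orth (seps c (gate E (comb_hyperplane E u v) c)) c"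
proof
  let ?F0 = "comb_hyperplane E u v" and ?k = "hyperplane_of E u v"
  fix x assume x: "x \<in> orth {?k} c"
  have "transverse H s" if H: "H \<in> seps x c" and s: "s \<in> seps c (gate E ?F0 c)" for H s
  proof -
    have far: "\<forall>z\<in>?F0. separates s c z" using s mem_seps_gate_iff[OF convex_comb_hyperplane[OF e]] by blast
    have "transverse H ?k" using x H unfolding orth_def by blast
    then obtain z1 z2 where z: "z1 \<in> ?F0" "z2 \<in> ?F0" "separates H z1 z2"
      using transverse_crosses_comb[OF e] H seps_hyperplanes by blast
    have "s \<notin> seps x c" using x not_transverse_seps_gate_comb[OF e s] unfolding orth_def by blast
    then have "\<not> separates s x c" using s seps_hyperplanes unfolding seps_def by auto
    then have "separates s x z1" "\<not> separates s z1 z2" using far z unfolding separates_def by blast+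
    moreover have "separates H x c" using H unfolding seps_def by auto
    ultimately show ?thesis using transverseI[of H x c z1 z2 s] z(3) \<open>\<not> separates s x c\<close> by blast
  qed
  then show "x \<in> orth (seps c (gate E ?F0 c)) c" unfolding orth_def by blast
qed

lemma comb_hyperplane_not_seps:
  assumes "E c c1" "a \<in> comb_hyperplane E c c1" "b \<in> comb_hyperplane E c c1"
  shows "hyperplane_of E c c1 \<notin> seps a b"
  using assms seps_orth_transverse[of a "{hyperplane_of E c c1}" c b] comb_hyperplane_eq_orth[OF assms(1)]
    transverse_irrefl by blast

lemma gate_comb_hyperplane_adj:
  assumes e: "E c c1" and x: "x \<in> comb_hyperplane E c c1" and xx': "seps x x' = {hyperplane_of E c c1}"
  shows "gate E (comb_hyperplane E c c1) x' = x"
proof (rule gate_eqI[OF convex_comb_hyperplane[OF e] x], intro ballI)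
  fix z assume "z \<in> comb_hyperplane E c c1"
  then show "x \<in> I x' z"
    unfolding mem_interval_iff_seps using comb_hyperplane_not_seps[OF e x] xx' seps_sym[of x' x] by auto
qed

lemma orth_eq_gate_image_across_edge:
  assumes e: "E c c1" and sub: "orth K c \<subseteq> comb_hyperplane E c c1"
  shows "orth K c = gate E (comb_hyperplane E c c1) ` orth K c1"
proof
  let ?s = "hyperplane_of E c c1" and ?C = "comb_hyperplane E c c1"
  have cC: "c \<in> ?C" using comb_hyperplane_eq_orth[OF e] by simp
  show "orth K c \<subseteq> gate E ?C ` orth K c1"
  proof
    fix x assume x: "x \<in> orth K c"
    then have xC: "x \<in> ?C" using sub by blast
    then obtain x' where xx: "(x, x') \<in> ?s" using mem_comb_hyperplane_iff by blast
    have sxx: "seps x x' = {?s}"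
      using seps_adj hyperplane_of_edge[OF e xx] mem_hyperplane_of_iff_separates[OF e] xx by auto
    have "seps x' c1 = seps x c"
    proof (rule set_eqI)
      fix H
      have "H \<in> seps x' x \<longleftrightarrow> H = ?s" "H \<in> seps c c1 \<longleftrightarrow> H = ?s"
        using sxx seps_sym[of x' x] seps_adj[OF e] by auto
      then show "H \<in> seps x' c1 \<longleftrightarrow> H \<in> seps x c"
        using mem_seps_xor[of H x' c1 x] mem_seps_xor[of H x c1 c] comb_hyperplane_not_seps[OF e xC cC]
          seps_hyperplanes[of x c] hyperplane_of_in_hyperplanes[OF e] by blast
    qed
    then have "x' \<in> orth K c1" using x unfolding orth_def by simp
    then show "x \<in> gate E ?C ` orth K c1" using gate_comb_hyperplane_adj[OF e xC sxx] by force
  qed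
  show "gate E ?C ` orth K c1 \<subseteq> orth K c"
  proof
    fix z assume "z \<in> gate E ?C ` orth K c1"
    then obtain y where y: "y \<in> orth K c1" "z = gate E ?C y" by blast
    have "gate E ?C c1 = c" using gate_comb_hyperplane_adj[OF e cC seps_adj[OF e]] .
    then have "seps z c \<subseteq> seps y c1"
      using seps_gate_subset[OF convex_comb_hyperplane[OF e], of y c1] y(2) by simp
    then show "z \<in> orth K c" using y(1) unfolding orth_def by blast
  qed
qed

text \<open>Induction on the distance from c to the combinatorial hyperplane: one step towards it
is a gate map into the combinatorial hyperplane of that step.\<close>
lemma orth_hyperplane_in_hyperclosure:
  assumes k: "k \<in> HP"
  shows "orth {k} c \<in> hyperclosure E"
proof -
  obtain u v where e: "E u v" and k_eq: "k = hyperplane_of E u v" using k mem_hyperplanes_iff by auto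
  let ?F0 = "comb_hyperplane E u v"
  have F0: "convex_sub E ?F0" using convex_comb_hyperplane[OF e] .
  show ?thesis
  proof (induction "d c (gate E ?F0 c)" arbitrary: c rule: less_induct)
    case less
    show ?case
    proof (cases "c \<in> ?F0")
      case True
      then have "orth {k} c = ?F0" using orth_rebase comb_hyperplane_eq_orth[OF e] k_eq by simp
      then show ?thesis using comb_hyperplane_in_hyperclosure[OF e] by simp
    next
      case False
      let ?p = "gate E ?F0 c"
      have "?p \<noteq> c" using False gate_in[OF F0] by metis
      then obtain c1 where c1: "E c c1" "d c1 ?p + 1 = d c ?p" using step_towards[of c ?p] by auto
      have c1I: "c1 \<in> I c ?p" unfolding mem_interval_iff using c1 gdist_adj by simp
      have "gate E ?F0 c1 \<in> I c1 ?p" using gate_in_interval[OF F0 gate_in[OF F0]] .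
      then have "d c1 (gate E ?F0 c1) < d c ?p" using c1(2) unfolding mem_interval_iff by linarith
      then have IH: "orth {k} c1 \<in> hyperclosure E" by (rule less.hyps)
      have "hyperplane_of E c c1 \<in> seps c ?p" using seps_interval_Un[OF c1I] seps_adj[OF c1(1)] by blast
      then have "orth (seps c ?p) c \<subseteq> orth {hyperplane_of E c c1} c" by (simp add: orth_antimono)
      then have "orth {k} c \<subseteq> orth {hyperplane_of E c c1} c"
        using orth_hyperplane_subset_orth_seps_gate[OF e, of c] k_eq by blast
      then have "orth {k} c = gate E (comb_hyperplane E c c1) ` orth {k} c1"
        using orth_eq_gate_image_across_edge[OF c1(1)] comb_hyperplane_eq_orth[OF c1(1)] by simp
      then show ?thesis
        using hyperclosure.gate_img[OF comb_hyperplane_in_hyperclosure[OF c1(1)] IH] by simp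
    qed
  qed
qed

lemma orth_in_hyperclosure:
  assumes "finite K" "K \<subseteq> HP"
  shows "orth K c \<in> hyperclosure E"
  using assms
proof (induction K rule: finite_induct)
  case empty
  then show ?case using orth_empty hyperclosure.whole by simp
next
  case (insert k K)
  have "gate E (orth {k} c) ` orth K c = orth {k} c \<inter> orth K c"
    by (rule gate_image_Int[OF convex_orth convex_orth, where w = c]) simp
  moreover have "gate E (orth {k} c) ` orth K c \<in> hyperclosure E"
    using insert hyperclosure.gate_img[OF orth_hyperplane_in_hyperclosure] by simp
  ultimately show ?case using orth_insert[of k K c] by simp
qed

lemma gate_image_orth_subset:
  assumes pq: "gate E (orth K2 q) p = q" and qp: "gate E (orth K1 p) q = p"
  shows "gate E (orth K1 p) ` orth K2 q \<subseteq> orth (K1 \<union> K2 \<union> seps p q) p"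
proof
  let ?F1 = "orth K1 p" and ?F2 = "orth K2 q"
  fix x assume "x \<in> gate E ?F1 ` ?F2"
  then obtain y where y: "y \<in> ?F2" "x = gate E ?F1 y" by blast
  have xF1: "x \<in> ?F1" using gate_in[OF convex_orth] y(2) by simp
  have sub: "seps x p \<subseteq> seps y q" using seps_gate_subset[OF convex_orth[of K1 p], where a = y and b = q] y(2) qp by simp
  have "transverse H k" if H: "H \<in> seps x p" and k: "k \<in> K1 \<union> K2 \<union> seps p q" for H k
  proof -
    consider "k \<in> K1" | "k \<in> K2" | "k \<in> seps p q" using k by blast
    then show ?thesis
    proof cases
      case 1
      then show ?thesis using seps_orth_transverse[OF xF1 orth_base H] by blast
    next
      case 2
      then show ?thesis using seps_orth_transverse[OF y(1) orth_base] sub H by blast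
    next
      case 3
      have "separates k q x" "separates k p y" "separates k p q"
        using 3 mem_seps_gate_iff[OF convex_orth, of k q K1 p] mem_seps_gate_iff[OF convex_orth, of k p K2 q]
          pq qp xF1 y(1) seps_sym[of p q] unfolding seps_def by auto
      then have "separates k x y" "\<not> separates k x p" "\<not> separates k y q" unfolding separates_def by blast+
      moreover have "separates H x p" "separates H y q" using H sub unfolding seps_def by auto
      ultimately show ?thesis using transverseI[of H x p y q k] transverse_sym by blast
    qed
  qed
  then show "x \<in> orth (K1 \<union> K2 \<union> seps p q) p" unfolding orth_def by blast
qed

lemma orth_subset_gate_image_orth:
  assumes pq: "gate E (orth K2 q) p = q" and qp: "gate E (orth K1 p) q = p"
  shows "orth (K1 \<union> K2 \<union> seps p q) p \<subseteq> gate E (orth K1 p) ` orth K2 q"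
proof
  let ?F1 = "orth K1 p" and ?F2 = "orth K2 q" and ?S = "seps p q"
  fix x assume x: "x \<in> orth (K1 \<union> K2 \<union> ?S) p"
  have xK: "x \<in> ?F1" "x \<in> orth K2 p" "x \<in> orth ?S p" using x orth_Un by auto
  have far: "\<forall>s\<in>?S. \<forall>z\<in>?F1. separates s q z"
    using mem_seps_gate_iff[OF convex_orth, of _ q K1 p] qp seps_sym[of p q] by auto
  have dj: "seps x p \<inter> ?S = {}" using orth_not_seps[OF xK(3)] by blast
  then have "seps x p \<union> ?S = seps x q" using seps_Un_disjoint[of x p q] by simp
  then have "\<exists>y. seps x y = ?S \<and> seps y q = seps x p"
    by (rule split_point) (use dj xK(3) in \<open>auto simp: orth_def\<close>)
  then obtain y where y: "seps x y = ?S" "seps y q = seps x p" by blast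
  have "y \<in> ?F2" using xK(2) y(2) unfolding orth_def by auto
  moreover have "gate E ?F1 y = x"
  proof (rule gate_eqI[OF convex_orth xK(1)], intro ballI)
    fix w assume "w \<in> ?F1"
    then have "seps y x \<inter> seps x w = {}"
      using far xK(1) y(1) seps_sym[of y x] unfolding seps_def separates_def by blast
    then show "x \<in> I y w" unfolding mem_interval_iff_seps .
  qed
  ultimately show "x \<in> gate E ?F1 ` ?F2" by force
qed

lemma gate_image_orth:
  assumes "finite K1" "K1 \<subseteq> HP" "finite K2" "K2 \<subseteq> HP"
  shows "\<exists>K c. finite K \<and> K \<subseteq> HP \<and> gate E (orth K1 c1) ` orth K2 c2 = orth K c"
proof -
  obtain p q where pq: "p \<in> orth K1 c1" "q \<in> orth K2 c2"
    "gate E (orth K2 c2) p = q" "gate E (orth K1 c1) q = p"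
    by (rule mutual_gates_ex[OF convex_orth convex_orth])
  have F1: "orth K1 c1 = orth K1 p" and F2: "orth K2 c2 = orth K2 q"
    using orth_rebase[OF pq(1)] orth_rebase[OF pq(2)] by simp_all
  have g: "gate E (orth K2 q) p = q" "gate E (orth K1 p) q = p" using pq(3,4) unfolding F1 F2 .
  have "gate E (orth K1 c1) ` orth K2 c2 = orth (K1 \<union> K2 \<union> seps p q) p"
    unfolding F1 F2 using gate_image_orth_subset[OF g] orth_subset_gate_image_orth[OF g] by (rule equalityI)
  moreover have "finite (K1 \<union> K2 \<union> seps p q)" "K1 \<union> K2 \<union> seps p q \<subseteq> HP"
    using assms finite_seps seps_hyperplanes by auto
  ultimately show ?thesis by (intro exI conjI)
qed

lemma seps_gate_not_crossing:
  assumes G: "convex_sub E G"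
  shows "seps x (gate E G x) \<inter> crossing G = {}"
proof (rule ccontr)
  assume "seps x (gate E G x) \<inter> crossing G \<noteq> {}"
  then obtain H where "H \<in> seps x (gate E G x)" "H \<in> crossing G" by blast
  then obtain a b where "a \<in> G" "b \<in> G" "separates H a b" "\<forall>z\<in>G. separates H x z"
    using mem_seps_gate_iff[OF G] mem_crossing_iff[OF convex_sub_geod_closed[OF G]] by blast
  then show False unfolding separates_def by blast
qed

lemma seps_gate_parallel_eq:
  assumes F: "convex_sub E F" and G: "convex_sub E G" and par: "parallel E F G"
    and "x \<in> F" "y \<in> F"
  shows "seps y (gate E G y) = seps x (gate E G x)"
proof -
  have "\<not> separates H x y" if "H \<in> seps z (gate E G z)" for H z
    using that seps_gate_not_crossing[OF G] parallel_crossing_eq[OF par] assms(4,5)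
      mem_crossing_iff[OF convex_sub_geod_closed[OF F]] seps_hyperplanes by blast
  then show ?thesis using mem_seps_gate_iff[OF G] unfolding separates_def by blast
qed

lemma subset_orth_parallel:
  assumes G: "convex_sub E G" and par: "parallel E (orth K c) G"
  shows "G \<subseteq> orth (K \<union> seps c (gate E G c)) (gate E G c)"
proof
  let ?F = "orth K c" and ?c' = "gate E G c" and ?S = "seps c (gate E G c)"
  have cr: "crossing ?F = crossing G" using parallel_crossing_eq[OF par] .
  fix x assume xG: "x \<in> G"
  have "transverse H k" if H: "H \<in> seps x ?c'" and k: "k \<in> K \<union> ?S" for H k
  proof -
    have "H \<in> crossing ?F" using seps_subset_crossing[OF convex_sub_geod_closed[OF G] xG gate_in[OF G]] H cr by blast
    then obtain f1 f2 where f: "f1 \<in> ?F" "f2 \<in> ?F" "separates H f1 f2"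
      using mem_crossing_iff[OF geod_closed_orth] by blast
    show ?thesis
    proof (cases "k \<in> K")
      case True
      then show ?thesis using seps_orth_transverse[OF f(1,2)] f(3) crossing_hyperplanes \<open>H \<in> crossing ?F\<close>
        unfolding seps_def by blast
    next
      case False
      then have kS: "k \<in> ?S" using k by simp
      have "k \<notin> crossing ?F" using kS seps_gate_not_crossing[OF G] cr by blast
      then have "\<not> separates k c f1" "\<not> separates k c f2"
        using f(1,2) kS mem_crossing_iff[OF geod_closed_orth] seps_hyperplanes orth_base[of c K] by blast+
      moreover have "separates k c x" "separates k c ?c'"
        using kS mem_seps_gate_iff[OF G] xG gate_in[OF G] by blast+
      ultimately have "separates k f1 x" "\<not> separates k f1 f2" "\<not> separates k x ?c'"
        unfolding separates_def by blast+
      moreover have "separates H x ?c'" using H unfolding seps_def by auto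
      ultimately show ?thesis using transverseI[OF f(3)] transverse_sym by blast
    qed
  qed
  then show "x \<in> orth (K \<union> ?S) ?c'" unfolding orth_def by blast
qed

lemma orth_parallel_subset:
  assumes G: "convex_sub E G" and par: "parallel E (orth K c) G"
  shows "orth (K \<union> seps c (gate E G c)) (gate E G c) \<subseteq> G"
proof
  let ?c' = "gate E G c" and ?S = "seps c (gate E G c)"
  fix x assume x: "x \<in> orth (K \<union> ?S) ?c'"
  have xK: "x \<in> orth K ?c'" "x \<in> orth ?S ?c'" using x orth_Un by auto
  have dj: "seps x ?c' \<inter> ?S = {}" using orth_not_seps[OF xK(2)] by blast
  have "seps x ?c' \<union> ?S = seps x c"
    using seps_Un_disjoint[of x ?c' c] dj seps_sym[of c ?c'] by simp
  then have "\<exists>y. seps x y = ?S \<and> seps y c = seps x ?c'"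
    by (rule split_point) (use dj xK(2) in \<open>auto simp: orth_def\<close>)
  then obtain y where y: "seps x y = ?S" "seps y c = seps x ?c'" by blast
  have "y \<in> orth K c" using xK(1) y(2) unfolding orth_def by auto
  then have "seps y (gate E G y) = seps y x"
    using seps_gate_parallel_eq[OF convex_orth G par orth_base, of y] y(1) seps_sym[of x y] by simp
  then have "seps x (gate E G y) = {}" using seps_symdiff[of x "gate E G y" y] seps_sym[of x y] by auto
  then have "x = gate E G y" by (simp add: seps_empty_iff)
  then show "x \<in> G" using gate_in[OF G] by simp
qed

lemma parallel_orth:
  assumes "finite K" "K \<subseteq> HP" and G: "convex_sub E G" and par: "parallel E (orth K c) G"
  shows "\<exists>K' c'. finite K' \<and> K' \<subseteq> HP \<and> G = orth K' c'"
proof -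
  let ?K' = "K \<union> seps c (gate E G c)"
  have "G = orth ?K' (gate E G c)" using subset_orth_parallel[OF G par] orth_parallel_subset[OF G par] by blast
  moreover have "finite ?K'" "?K' \<subseteq> HP" using assms finite_seps seps_hyperplanes by auto
  ultimately show ?thesis by blast
qed

lemma hyperclosure_orth:
  assumes "F \<in> hyperclosure E"
  shows "\<exists>K c. finite K \<and> K \<subseteq> HP \<and> F = orth K c"
  using assms
proof (induction rule: hyperclosure.induct)
  case whole
  then show ?case using orth_empty by blast
next
  case (combhyp Y)
  then obtain u v where uv: "E u v" "Y = comb_hyperplane E u v" unfolding comb_hyperplanes_def by auto
  then have "Y = orth {hyperplane_of E u v} u" using comb_hyperplane_eq_orth by simp
  then show ?case using hyperplane_of_in_hyperplanes[OF uv(1)] by blast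
next
  case (gate_img F F')
  then obtain K1 c1 K2 c2 where "finite K1" "K1 \<subseteq> HP" "F = orth K1 c1"
    "finite K2" "K2 \<subseteq> HP" "F' = orth K2 c2" by blast
  then show ?case using gate_image_orth[of K1 K2 c1 c2] by simp
next
  case (par F G)
  then obtain K c where "finite K" "K \<subseteq> HP" "F = orth K c" by blast
  then show ?case using parallel_orth[of K G c] par.hyps(2,3) by simp
qed

section \<open>Orthogonal complements\<close>

definition product_region where
  "product_region C = {x. \<forall>h\<in>seps x (gate E C x). \<forall>k\<in>crossing C. transverse h k}"

lemma seps_gate_interval_subset:
  assumes C: "convex_sub E C" and z: "z \<in> I x y"
  shows "seps z (gate E C z) \<subseteq> seps x (gate E C x) \<union> seps y (gate E C y)"
proof
  fix H assume "H \<in> seps z (gate E C z)"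
  then have H: "H \<in> HP" "\<forall>w\<in>C. separates H z w" using mem_seps_gate_iff[OF C] by auto
  then have "\<not> separates H x z \<or> \<not> separates H z y" using z unfolding mem_interval_iff_separates by auto
  then have "(\<forall>w\<in>C. separates H x w) \<or> (\<forall>w\<in>C. separates H y w)"
    using H(2) separates_xor separates_sym by blast
  then show "H \<in> seps x (gate E C x) \<union> seps y (gate E C y)" using mem_seps_gate_iff[OF C] H(1) by blast
qed

lemma seps_gate_interval_Int:
  assumes C: "convex_sub E C" and z: "z \<in> I x y"
  shows "seps x (gate E C x) \<inter> seps y (gate E C y) \<subseteq> seps z (gate E C z)"
proof
  fix H assume "H \<in> seps x (gate E C x) \<inter> seps y (gate E C y)"
  then have H: "H \<in> HP" "\<forall>w\<in>C. separates H x w" "\<forall>w\<in>C. separates H y w"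
    using mem_seps_gate_iff[OF C] by auto
  obtain w0 where "w0 \<in> C" using C unfolding convex_sub_def by blast
  then have "\<not> separates H x y" using H unfolding separates_def by blast
  moreover have "\<not> (separates H x z \<and> separates H z y)" using z H(1) unfolding mem_interval_iff_separates by auto
  ultimately have "\<forall>w\<in>C. separates H z w" using H(2) unfolding separates_def by blast
  then show "H \<in> seps z (gate E C z)" using mem_seps_gate_iff[OF C] H(1) by blast
qed

lemma geod_closed_product_region:
  assumes C: "convex_sub E C"
  shows "geod_closed E (product_region C)"
  unfolding geod_closed_iff
proof (intro ballI subsetI)
  fix x y z assume "x \<in> product_region C" "y \<in> product_region C" "z \<in> I x y"
  then show "z \<in> product_region C"
    using seps_gate_interval_subset[OF C] unfolding product_region_def by blast
qed

lemma parallel_subset_product_region: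
  assumes C: "convex_sub E C" and B: "convex_sub E B" and par: "parallel E C B"
  shows "B \<subseteq> product_region C"
proof
  fix x assume x: "x \<in> B"
  have cr: "crossing C = crossing B" using parallel_crossing_eq[OF par] .
  have "transverse h k" if h: "h \<in> seps x (gate E C x)" and k: "k \<in> crossing C" for h k
  proof -
    have hx: "h \<in> HP" "\<forall>w\<in>C. separates h x w" using h mem_seps_gate_iff[OF C] by auto
    have "h \<notin> crossing B" using seps_gate_not_crossing[OF C] h cr by blast
    then have nB: "\<not> separates h p q" if "p \<in> B" "q \<in> B" for p q
      using that hx(1) mem_crossing_iff[OF convex_sub_geod_closed[OF B]] by blast
    obtain a b where ab: "a \<in> C" "b \<in> C" "separates k a b"
      using k mem_crossing_iff[OF convex_sub_geod_closed[OF C]] by blast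
    obtain a' b' where ab': "a' \<in> B" "b' \<in> B" "separates k a' b'"
      using k cr mem_crossing_iff[OF convex_sub_geod_closed[OF B]] by blast
    have "\<not> separates h a b" "separates h a a'"
      using hx(2) ab nB[OF x ab'(1)] unfolding separates_def by blast+
    then show ?thesis using transverseI[OF ab(3) ab'(3)] nB[OF ab'(1,2)] transverse_sym by blast
  qed
  then show "x \<in> product_region C" unfolding product_region_def by blast
qed

lemma split_point_gate:
  assumes C: "convex_sub E C" and x: "x \<in> product_region C" and b: "b \<in> C"
  shows "\<exists>y. seps y b = seps x (gate E C x) \<and> gate E C y = b"
proof -
  let ?a = "gate E C x"
  have aI: "?a \<in> I x b" and aC: "?a \<in> C" using gate_in[OF C] gate_in_interval[OF C b] by auto
  have "\<exists>y. seps x y = seps ?a b \<and> seps y b = seps x ?a"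
  proof (rule split_point)
    show "seps x ?a \<union> seps ?a b = seps x b" using seps_interval_Un[OF aI] by simp
    show "seps x ?a \<inter> seps ?a b = {}" using aI mem_interval_iff_seps by simp
    show "\<forall>h\<in>seps x ?a. \<forall>k\<in>seps ?a b. transverse h k"
      using x seps_subset_crossing[OF convex_sub_geod_closed[OF C] aC b] unfolding product_region_def by blast
  qed
  then obtain y where y: "seps y b = seps x ?a" by blast
  have "gate E C y = b"
  proof (rule gate_eqI[OF C b], intro ballI)
    fix w assume w: "w \<in> C"
    have "seps y b \<inter> seps b w = {}"
      using y mem_seps_gate_iff[OF C] b w unfolding seps_def separates_def by blast
    then show "b \<in> I y w" unfolding mem_interval_iff_seps .
  qed
  then show ?thesis using y by blast
qed

lemma geod_closed_gate_fibre:
  assumes C: "convex_sub E C"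
  shows "geod_closed E {y. seps y (gate E C y) = S}"
  unfolding geod_closed_iff
proof (intro ballI subsetI)
  fix y1 y2 z assume "y1 \<in> {y. seps y (gate E C y) = S}" "y2 \<in> {y. seps y (gate E C y) = S}" "z \<in> I y1 y2"
  then show "z \<in> {y. seps y (gate E C y) = S}"
    using seps_gate_interval_subset[OF C] seps_gate_interval_Int[OF C] by blast
qed

lemma parallel_gate_fibre:
  assumes C: "convex_sub E C" and x: "x \<in> product_region C"
  shows "parallel E C {y. seps y (gate E C y) = seps x (gate E C x)}"
  unfolding parallel_def
proof (intro ballI)
  let ?S = "seps x (gate E C x)" and ?B = "{y. seps y (gate E C y) = seps x (gate E C x)}"
  fix H assume H: "H \<in> HP"
  have "H \<notin> ?S" if "crosses H C" using that seps_gate_not_crossing[OF C] H unfolding crossing_def by blast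
  have B: "geod_closed E ?B" using geod_closed_gate_fibre[OF C] .
  show "crosses H C \<longleftrightarrow> crosses H ?B"
  proof
    assume "crosses H C"
    then obtain a b where ab: "a \<in> C" "b \<in> C" "separates H a b"
      using crosses_iff[OF convex_sub_geod_closed[OF C] H] by blast
    obtain ya yb where "seps ya a = ?S" "gate E C ya = a" "seps yb b = ?S" "gate E C yb = b"
      using split_point_gate[OF C x ab(1)] split_point_gate[OF C x ab(2)] by blast
    moreover have "H \<notin> ?S" using \<open>crosses H C\<close> \<open>crosses H C \<Longrightarrow> H \<notin> ?S\<close> by blast
    ultimately have "ya \<in> ?B" "yb \<in> ?B" "separates H ya yb"
      using ab(3) H unfolding seps_def separates_def by auto
    then show "crosses H ?B" using crosses_iff[OF B H] by blast
  next
    assume "crosses H ?B"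
    then obtain y1 y2 where yy: "y1 \<in> ?B" "y2 \<in> ?B" "separates H y1 y2" using crosses_iff[OF B H] by blast
    obtain w0 where w0: "w0 \<in> C" using C unfolding convex_sub_def by blast
    have "H \<notin> ?S" using yy mem_seps_gate_iff[OF C] w0 unfolding separates_def by blast
    then have "\<not> separates H y1 (gate E C y1)" "\<not> separates H y2 (gate E C y2)"
      using yy(1,2) H unfolding seps_def by auto
    then have "separates H (gate E C y1) (gate E C y2)" using yy(3) unfolding separates_def by blast
    then show "crosses H C" using crosses_iff[OF convex_sub_geod_closed[OF C] H] gate_in[OF C] by blast
  qed
qed

lemma parallel_hull_eq_product_region:
  assumes C: "convex_sub E C"
  shows "parallel_hull E C = product_region C"
proof
  show "parallel_hull E C \<subseteq> product_region C"
    unfolding parallel_hull_def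
    by (rule convex_hull_sub_least[OF geod_closed_product_region[OF C]])
      (use parallel_subset_product_region[OF C] in blast)
  show "product_region C \<subseteq> parallel_hull E C"
  proof
    fix x assume x: "x \<in> product_region C"
    let ?B = "{y. seps y (gate E C y) = seps x (gate E C x)}"
    have "x \<in> ?B" by simp
    then have "convex_sub E ?B" unfolding convex_sub_def using geod_closed_gate_fibre[OF C] by auto
    then have "?B \<in> {B. convex_sub E B \<and> parallel E C B}" using parallel_gate_fibre[OF C x] by simp
    then have "x \<in> \<Union>{B. convex_sub E B \<and> parallel E C B}" using \<open>x \<in> ?B\<close> by (rule UnionI)
    then show "x \<in> parallel_hull E C" unfolding parallel_hull_def by (rule subsetD[OF convex_hull_sub_superset])
  qed
qed

lemma orth_compl_eq_orth:
  assumes C: "convex_sub E C" and c: "c \<in> C"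
  shows "orth_compl E C c = orth (crossing C) c"
proof
  show "orth_compl E C c \<subseteq> orth (crossing C) c"
    unfolding orth_compl_def parallel_hull_eq_product_region[OF C] product_region_def orth_def by auto
  show "orth (crossing C) c \<subseteq> orth_compl E C c"
  proof
    fix x assume x: "x \<in> orth (crossing C) c"
    have gC: "gate E C x \<in> C" "gate E C x \<in> I x c" using gate_in[OF C] gate_in_interval[OF C c] by auto
    have "seps (gate E C x) c \<subseteq> crossing C" using seps_subset_crossing[OF convex_sub_geod_closed[OF C] gC(1) c] .
    moreover have "seps (gate E C x) c \<subseteq> seps x c" using seps_interval_Un[OF gC(2)] by blast
    ultimately have "seps (gate E C x) c = {}" using x transverse_irrefl unfolding orth_def by blast
    then have gc: "gate E C x = c" by (simp add: seps_empty_iff)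
    then have "x \<in> product_region C" using x unfolding product_region_def orth_def by simp
    then show "x \<in> orth_compl E C c"
      unfolding orth_compl_def parallel_hull_eq_product_region[OF C] using gc by simp
  qed
qed

lemma orth_UN: "orth (\<Union>i\<in>A. K i) c = (\<Inter>i\<in>A. orth (K i) c)"
  unfolding orth_def by blast

lemma orth_hyperplane_eq_orth_seps:
  assumes "k \<in> HP"
  shows "\<exists>z. orth {k} c = orth (seps c z) c"
proof -
  obtain u v where e: "E u v" and k: "k = hyperplane_of E u v" and cW: "c \<in> halfspace u v"
    using hyperplane_oriented[OF assms] by blast
  let ?F0 = "comb_hyperplane E u v"
  let ?p = "gate E ?F0 c"
  obtain p' where pp: "(?p, p') \<in> k" and pW: "?p \<in> halfspace u v"
    using gate_in[OF convex_comb_hyperplane[OF e]] mem_comb_hyperplane_iff k by blast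
  have ep: "E ?p p'" and hk: "hyperplane_of E ?p p' = k"
    using pp hyperplane_of_eq[OF e] hyperplane_of_edge[OF e] k by auto
  have "k \<notin> seps c ?p" using separates_hyperplane_of[OF e] cW pW k unfolding seps_def by auto
  then have "seps c p' = insert k (seps c ?p)" using seps_adj_insert[OF ep] hk by simp
  then have "orth (seps c p') c = orth {k} c"
    using orth_insert[of k "seps c ?p" c] orth_hyperplane_subset_orth_seps_gate[OF e, of c] k by auto
  then show ?thesis by metis
qed

lemma orth_eq_orth_seps_finite:
  assumes "finite K" "K \<subseteq> HP"
  shows "\<exists>Z. finite Z \<and> orth K c = orth (\<Union>z\<in>Z. seps c z) c"
proof -
  have "\<forall>k\<in>K. \<exists>z. orth {k} c = orth (seps c z) c"
    using orth_hyperplane_eq_orth_seps assms(2) by blast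
  then obtain z where z: "\<forall>k\<in>K. orth {k} c = orth (seps c (z k)) c" by metis
  have "orth K c = (\<Inter>k\<in>K. orth {k} c)" using orth_UN[of "\<lambda>k. {k}" K c] by simp
  also have "\<dots> = orth (\<Union>y\<in>z ` K. seps c y) c" using z orth_UN[of "seps c" "z ` K" c] by simp
  finally show ?thesis using assms(1) by blast
qed

lemma hull_subset_seps_bounded:
  "convex_hull_sub E (insert c Z) \<subseteq> {x. seps x c \<subseteq> (\<Union>z\<in>Z. seps c z)}"
proof (rule convex_hull_sub_least)
  let ?U = "\<Union>z\<in>Z. seps c z"
  show "geod_closed E {x. seps x c \<subseteq> ?U}"
    unfolding geod_closed_iff
  proof (intro ballI subsetI)
    fix x y w assume "x \<in> {x. seps x c \<subseteq> ?U}" "y \<in> {x. seps x c \<subseteq> ?U}" "w \<in> I x y"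
    then show "w \<in> {x. seps x c \<subseteq> ?U}" using seps_interval_subset[of w x y c] by auto
  qed
  show "insert c Z \<subseteq> {x. seps x c \<subseteq> ?U}" using seps_sym by auto
qed

lemma crossing_convex_hull_insert:
  "crossing (convex_hull_sub E (insert c Z)) = (\<Union>z\<in>Z. seps c z)"
proof
  let ?C = "convex_hull_sub E (insert c Z)"
  have C: "geod_closed E ?C" and sup: "insert c Z \<subseteq> ?C"
    by (rule geod_closed_convex_hull_sub, rule convex_hull_sub_superset)
  show "crossing ?C \<subseteq> (\<Union>z\<in>Z. seps c z)"
  proof
    fix H assume "H \<in> crossing ?C"
    then obtain a b where ab: "a \<in> ?C" "b \<in> ?C" "H \<in> seps a b"
      using mem_crossing_iff[OF C] unfolding seps_def by blast
    have "seps a c \<subseteq> (\<Union>z\<in>Z. seps c z)" "seps b c \<subseteq> (\<Union>z\<in>Z. seps c z)"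
      using ab(1,2) hull_subset_seps_bounded by blast+
    then show "H \<in> (\<Union>z\<in>Z. seps c z)"
      using ab(3) seps_triangle[of a b c] seps_sym[of c b] by blast
  qed
  show "(\<Union>z\<in>Z. seps c z) \<subseteq> crossing ?C"
  proof
    fix H assume "H \<in> (\<Union>z\<in>Z. seps c z)"
    then obtain z where "z \<in> Z" "H \<in> seps c z" by blast
    moreover have "c \<in> ?C" "z \<in> ?C" using sup \<open>z \<in> Z\<close> by auto
    ultimately show "H \<in> crossing ?C" using seps_subset_crossing[OF C] by blast
  qed
qed

lemma finite_gdist_ball:
  assumes lf: "locally_finite E"
  shows "finite {z. d c z \<le> n}"
proof (induction n)
  case 0
  then show ?case by simp
next
  case (Suc n)
  have "{z. d c z \<le> Suc n} \<subseteq> {z. d c z \<le> n} \<union> (\<Union>w\<in>{z. d c z \<le> n}. {y. E w y})"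
  proof
    fix z assume z: "z \<in> {z. d c z \<le> Suc n}"
    show "z \<in> {z. d c z \<le> n} \<union> (\<Union>w\<in>{z. d c z \<le> n}. {y. E w y})"
    proof (cases "d c z \<le> n")
      case False
      then have "d z c = Suc n" using z gdist_sym by simp
      then obtain w where "E z w" "d w c = n" using gdist_Suc_neighbor by blast
      then show ?thesis using adj_sym gdist_sym by auto
    qed simp
  qed
  moreover have "finite ({z. d c z \<le> n} \<union> (\<Union>w\<in>{z. d c z \<le> n}. {y. E w y}))"
    using Suc.IH lf unfolding locally_finite_def by blast
  ultimately show ?case by (rule finite_subset)
qed

lemma finite_convex_hull_insert:
  assumes "locally_finite E" "finite Z"
  shows "finite (convex_hull_sub E (insert c Z))"
proof -
  let ?U = "\<Union>z\<in>Z. seps c z"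
  have "finite ?U" using assms(2) finite_seps by blast
  then have "card (seps x c) \<le> card ?U" if "seps x c \<subseteq> ?U" for x
    using that by (rule card_mono)
  then have "convex_hull_sub E (insert c Z) \<subseteq> {x. d c x \<le> card ?U}"
    using hull_subset_seps_bounded gdist_eq_card_seps gdist_sym by fastforce
  then show ?thesis using finite_gdist_ball[OF assms(1)] finite_subset by blast
qed

lemma hyperclosure_iff_orth: "F \<in> hyperclosure E \<longleftrightarrow> (\<exists>K c. finite K \<and> K \<subseteq> HP \<and> F = orth K c)"
  using hyperclosure_orth orth_in_hyperclosure by blast

lemma orth_iff_orth_compl:
  assumes "locally_finite E"
  shows "(\<exists>K c. finite K \<and> K \<subseteq> HP \<and> F = orth K c) \<longleftrightarrow>
    (\<exists>C c. finite C \<and> convex_sub E C \<and> c \<in> C \<and> F = orth_compl E C c)"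
proof
  assume "\<exists>K c. finite K \<and> K \<subseteq> HP \<and> F = orth K c"
  then obtain K c Z where "finite Z" "F = orth (\<Union>z\<in>Z. seps c z) c"
    using orth_eq_orth_seps_finite by metis
  moreover define C where "C = convex_hull_sub E (insert c Z)"
  moreover have "convex_sub E C" "c \<in> C"
    unfolding C_def convex_sub_def using geod_closed_convex_hull_sub convex_hull_sub_superset by blast+
  ultimately show "\<exists>C c. finite C \<and> convex_sub E C \<and> c \<in> C \<and> F = orth_compl E C c"
    using finite_convex_hull_insert[OF assms] crossing_convex_hull_insert orth_compl_eq_orth by metis
next
  assume "\<exists>C c. finite C \<and> convex_sub E C \<and> c \<in> C \<and> F = orth_compl E C c"
  then show "\<exists>K c. finite K \<and> K \<subseteq> HP \<and> F = orth K c"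
    using orth_compl_eq_orth finite_crossing crossing_hyperplanes by metis
qed

end

theorem mainTheorem10:
  fixes E :: "'a \<Rightarrow> 'a \<Rightarrow> bool" and F :: "'a set"
  assumes "cat0_cube_complex E" and "locally_finite E" and "convex_sub E F"
  shows "F \<in> hyperclosure E \<longleftrightarrow>
         (\<exists>C c. finite C \<and> convex_sub E C \<and> c \<in> C \<and> F = orth_compl E C c)"
proof -
  interpret cube_complex E
    using assms(1) unfolding cat0_cube_complex_def by unfold_locales
  show ?thesis using hyperclosure_iff_orth orth_iff_orth_compl[OF assms(2)] by simp
qed

end
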